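(* Consider the Krasovskii-regularized Lur'e system $\dot x\in F(x)$, $y=Cx$, of the context, and suppose Assumptions 1 and 3 hold. Then the system is state finite-time stable (SFTS) if and only if $C$ is invertible (i.e., $p=n$ and $C$ is nonsingular).
   Context: System: $\dot x=Ax+Bu$, $y=Cx$, $u=-\boldsymbol\psi(y)$, $x\in\mathbb{R}^n$, $u,y\in\mathbb{R}^p$, $\boldsymbol\psi(y)=(\psi_1(y_1),\dots,\psi_p(y_p))$. Piecewise continuous: finitely many discontinuities on each bounded interval, continuous between them, finite one-sided limits. Krasovskii regularization: $\boldsymbol\Psi_i(s):=\bigcap_{\delta>0}\overline{\mathrm{co}}\,\psi_i(s+\delta[-1,1])$, $\boldsymbol\Psi(y):=\boldsymbol\Psi_1(y_1)\times\dots\times\boldsymbol\Psi_p(y_p)$, $F(x):=\{Ax-Bw:w\in\boldsymbol\Psi(Cx)\}$; solutions are absolutely continuous functions satisfying $\dot x(t)\in F(x(t))$ a.e. Assumption 1: for each $i$, $\psi_i$ is piecewise continuous and there is $\zeta_i\in(0,+\infty]$ with $\psi_i(s)(\psi_i(s)-\zeta_is)\le0$ for all $s$ (for $\zeta_i=+\infty$: $\psi_i(s)s\ge0$). Assumption 3: (i) there is a diagonal $\overline\Gamma>0$ with $\overline\Gamma CB+(CB)^\top\overline\Gamma>0$; (ii) the origin is globally asymptotically stable for $\dot x\in F(x)$ (all maximal solutions defined on $\mathbb{R}_{\ge0}$ and there is $\beta\in\mathcal{KL}$ with $|x(t)|\le\beta(|x(0)|,t)$ for all solutions and $t\ge0$);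 (iii) for each $i$, $\lim_{s\to0^+}\psi_i(s)>0$ and $\lim_{s\to0^-}\psi_i(s)<0$. SFTS: all solutions forward complete, the origin is globally asymptotically stable, and for each solution there is $T\in[0,\infty)$ with $x(t)=0$ for all $t\ge T$. *)

theory Defs
  imports "HOL-Analysis.Analysis"
begin

definition piecewise_cont :: "(real \<Rightarrow> real) \<Rightarrow> bool" where
  "piecewise_cont f \<longleftrightarrow>
     (\<forall>a b. finite {s \<in> {a..b}. \<not> isCont f s}) \<and>
     (\<forall>s. \<exists>l. (f \<longlongrightarrow> l) (at_left s)) \<and>
     (\<forall>s. \<exists>l. (f \<longlongrightarrow> l) (at_right s))"

definition kras :: "(real \<Rightarrow> real) \<Rightarrow> real \<Rightarrow> real set" where
  "kras f s = (\<Inter>\<delta>\<in>{0<..}. closure (convex hull (f ` {s - \<delta> .. s + \<delta>})))"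

definition kras_vec :: "('p \<Rightarrow> real \<Rightarrow> real) \<Rightarrow> real^'p \<Rightarrow> (real^'p) set" where
  "kras_vec psi y = {w. \<forall>i. w $ i \<in> kras (psi i) (y $ i)}"

definition lure_F :: "real^'n^'n \<Rightarrow> real^'p^'n \<Rightarrow> real^'n^'p \<Rightarrow> ('p \<Rightarrow> real \<Rightarrow> real)
                      \<Rightarrow> real^'n \<Rightarrow> (real^'n) set" where
  "lure_F A B C psi x = {A *v x - B *v w | w. w \<in> kras_vec psi (C *v x)}"

definition abs_cont_on :: "real set \<Rightarrow> (real \<Rightarrow> 'a::real_normed_vector) \<Rightarrow> bool" where
  "abs_cont_on S f \<longleftrightarrow>
     (\<forall>\<epsilon>>0. \<exists>\<delta>>0. \<forall>(N::nat) (u::nat \<Rightarrow> real) v.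
        (\<forall>k<N. u k \<in> S \<and> v k \<in> S \<and> u k \<le> v k) \<and>
        (\<forall>j<N. \<forall>k<N. j \<noteq> k \<longrightarrow> v j \<le> u k \<or> v k \<le> u j) \<and>
        (\<Sum>k<N. v k - u k) < \<delta>
        \<longrightarrow> (\<Sum>k<N. norm (f (v k) - f (u k))) < \<epsilon>)"

definition is_sol :: "('a::real_normed_vector \<Rightarrow> 'a set) \<Rightarrow> (real \<Rightarrow> 'a) \<Rightarrow> ereal \<Rightarrow> bool" where
  "is_sol F x T \<longleftrightarrow> 0 < T \<and>
     (\<forall>t. 0 \<le> t \<and> ereal t < T \<longrightarrow> abs_cont_on {0..t} x) \<and>
     (AE t in lborel. 0 < t \<and> ereal t < T \<longrightarrow>
         (\<exists>v. (x has_vector_derivative v) (at t) \<and> v \<in> F (x t)))"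

definition is_max_sol :: "('a::real_normed_vector \<Rightarrow> 'a set) \<Rightarrow> (real \<Rightarrow> 'a) \<Rightarrow> ereal \<Rightarrow> bool" where
  "is_max_sol F x T \<longleftrightarrow> is_sol F x T \<and>
     \<not> (\<exists>y T'. T < T' \<and> is_sol F y T' \<and> (\<forall>t. 0 \<le> t \<and> ereal t < T \<longrightarrow> y t = x t))"

definition classK :: "(real \<Rightarrow> real) \<Rightarrow> bool" where
  "classK \<alpha> \<longleftrightarrow> continuous_on {0..} \<alpha> \<and> \<alpha> 0 = 0 \<and> strict_mono_on {0..} \<alpha>"

definition classKL :: "(real \<Rightarrow> real \<Rightarrow> real) \<Rightarrow> bool" where
  "classKL \<beta> \<longleftrightarrow> continuous_on ({0..} \<times> {0..}) (\<lambda>(r, t). \<beta> r t) \<and>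
     (\<forall>t\<ge>0. classK (\<lambda>r. \<beta> r t)) \<and>
     (\<forall>r\<ge>0. antimono_on {0..} (\<beta> r) \<and> (\<beta> r \<longlongrightarrow> 0) at_top)"

definition forward_complete :: "('a::real_normed_vector \<Rightarrow> 'a set) \<Rightarrow> bool" where
  "forward_complete F \<longleftrightarrow> (\<forall>x T. is_max_sol F x T \<longrightarrow> T = \<infinity>)"

definition GAS :: "('a::real_normed_vector \<Rightarrow> 'a set) \<Rightarrow> bool" where
  "GAS F \<longleftrightarrow> forward_complete F \<and>
     (\<exists>\<beta>. classKL \<beta> \<and> (\<forall>x T. is_sol F x T \<longrightarrow>
        (\<forall>t. 0 \<le> t \<and> ereal t < T \<longrightarrow> norm (x t) \<le> \<beta> (norm (x 0)) t)))"

definition SFTS :: "('a::real_normed_vector \<Rightarrow> 'a set) \<Rightarrow> bool" where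
  "SFTS F \<longleftrightarrow> forward_complete F \<and> GAS F \<and>
     (\<forall>x T. is_sol F x T \<longrightarrow>
        (\<exists>T0\<ge>0. \<forall>t. T0 \<le> t \<and> ereal t < T \<longrightarrow> x t = 0))"

definition assumption1 :: "('p \<Rightarrow> real \<Rightarrow> real) \<Rightarrow> bool" where
  "assumption1 psi \<longleftrightarrow> (\<forall>i. piecewise_cont (psi i) \<and>
     ((\<exists>\<zeta>>0. \<forall>s. psi i s * (psi i s - \<zeta> * s) \<le> 0) \<or> (\<forall>s. psi i s * s \<ge> 0)))"

definition diag_mat :: "real^'p \<Rightarrow> real^'p^'p" where
  "diag_mat g = (\<chi> i j. if i = j then g $ i else 0)"

definition assumption3 :: "real^'n^'n \<Rightarrow> real^'p^'n \<Rightarrow> real^'n^'p \<Rightarrow> ('p \<Rightarrow> real \<Rightarrow> real) \<Rightarrow> bool" where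
  "assumption3 A B C psi \<longleftrightarrow>
     (\<exists>\<gamma>::real^'p. (\<forall>i. \<gamma> $ i > 0) \<and>
        (let G = diag_mat \<gamma>; M = G ** (C ** B) + transpose (C ** B) ** G
         in \<forall>v. v \<noteq> 0 \<longrightarrow> v \<bullet> (M *v v) > 0)) \<and>
     GAS (lure_F A B C psi) \<and>
     (\<forall>i. (\<exists>l>0. (psi i \<longlongrightarrow> l) (at_right 0)) \<and> (\<exists>l<0. (psi i \<longlongrightarrow> l) (at_left 0)))"

end

theory Submission
  imports Defs
begin

text \<open>
  If \<open>C\<close> is invertible, take the Lyapunov function \<open>V x = \<Sum>\<^sub>i \<gamma>\<^sub>i L\<^sub>i ((C x)\<^sub>i)\<close>, where \<open>L\<^sub>i\<close> is
  piecewise linear with slopes \<open>\<psi>\<^sub>i(0+) > 0\<close> and \<open>\<psi>\<^sub>i(0-) < 0\<close>. Near the origin the input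
  \<open>w \<in> \<Psi>(C x)\<close> is close to this slope vector, so by positivity of \<open>\<Gamma> C B + (C B)\<^sup>T \<Gamma>\<close> the
  dissipation \<open>-w\<^sup>T \<Gamma> C B w\<close> dominates the linear part \<open>C A x\<close>, and \<open>V\<close> decreases at a uniform
  rate while \<open>C x \<noteq> 0\<close>. By GAS every solution enters this neighbourhood, so \<open>V\<close>, hence \<open>C x\<close> and \<open>x\<close>,
  vanish in finite time.

  If \<open>C\<close> is singular, \<open>C B\<close> is still invertible, and the feedback \<open>w = K x\<close>,
  \<open>K = (C B)\<^sup>-\<^sup>1 C A\<close>, makes \<open>ker C\<close> invariant under \<open>M = A - B K\<close>. Since \<open>\<Psi>(0)\<close> contains a box
  around \<open>0\<close>, the linear flow \<open>e\<^sup>t\<^sup>M x\<^sub>0\<close> with small \<open>x\<^sub>0 \<in> ker C\<close> is a Krasovskii solution as long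
  as it stays small, which GAS guarantees for all times. But a linear flow never reaches \<open>0\<close>.
\<close>

section \<open>Real analysis\<close>

definition nonoverlapping_intervals :: "real set \<Rightarrow> nat \<Rightarrow> (nat \<Rightarrow> real) \<Rightarrow> (nat \<Rightarrow> real) \<Rightarrow> bool" where
  "nonoverlapping_intervals S N u v \<longleftrightarrow>
     (\<forall>k<N. u k \<in> S \<and> v k \<in> S \<and> u k \<le> v k) \<and> (\<forall>j<N. \<forall>k<N. j \<noteq> k \<longrightarrow> v j \<le> u k \<or> v k \<le> u j)"

lemma abs_cont_on_iff:
  "abs_cont_on S f \<longleftrightarrow> (\<forall>e>0. \<exists>\<delta>>0. \<forall>N u v. nonoverlapping_intervals S N u v \<and> (\<Sum>k<N. v k - u k) < \<delta>
     \<longrightarrow> (\<Sum>k<N. norm (f (v k) - f (u k))) < e)"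
  unfolding abs_cont_on_def nonoverlapping_intervals_def by simp

lemma abs_cont_onE:
  assumes "abs_cont_on S f" "e > 0"
  obtains \<delta> where "\<delta> > 0" "\<And>N u v. nonoverlapping_intervals S N u v \<Longrightarrow>
    (\<Sum>k<N. v k - u k) < \<delta> \<Longrightarrow> (\<Sum>k<N. norm (f (v k) - f (u k))) < e"
proof -
  from assms obtain \<delta> where "\<delta> > 0" "\<forall>N u v. nonoverlapping_intervals S N u v \<and> (\<Sum>k<N. v k - u k) < \<delta>
     \<longrightarrow> (\<Sum>k<N. norm (f (v k) - f (u k))) < e"
    unfolding abs_cont_on_iff by blast
  then show thesis using that by blast
qed

lemma abs_cont_on_subset:
  assumes "abs_cont_on S f" "T \<subseteq> S"
  shows "abs_cont_on T f"
proof -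
  have "nonoverlapping_intervals T N u v \<Longrightarrow> nonoverlapping_intervals S N u v" for N u v
    using assms(2) unfolding nonoverlapping_intervals_def by blast
  then show ?thesis using assms(1) unfolding abs_cont_on_iff by meson
qed

lemma lipschitz_on_imp_abs_cont_on:
  fixes f :: "real \<Rightarrow> 'a::real_normed_vector"
  assumes L: "L-lipschitz_on S f"
  shows "abs_cont_on S f"
  unfolding abs_cont_on_iff
proof (intro allI impI)
  fix e :: real assume e: "e > 0"
  have L0: "L \<ge> 0" using lipschitz_on_nonneg[OF L] .
  show "\<exists>\<delta>>0. \<forall>N u v. nonoverlapping_intervals S N u v \<and> (\<Sum>k<N. v k - u k) < \<delta>
        \<longrightarrow> (\<Sum>k<N. norm (f (v k) - f (u k))) < e"
  proof (intro exI[of _ "e / (L + 1)"] conjI allI impI)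
    show "e / (L + 1) > 0" using e L0 by simp
    fix N :: nat and u v :: "nat \<Rightarrow> real"
    assume h: "nonoverlapping_intervals S N u v \<and> (\<Sum>k<N. v k - u k) < e / (L + 1)"
    have "(\<Sum>k<N. norm (f (v k) - f (u k))) \<le> (\<Sum>k<N. L * (v k - u k))"
    proof (rule sum_mono)
      fix k assume "k \<in> {..<N}"
      then have "u k \<in> S" "v k \<in> S" "u k \<le> v k" using h by (auto simp: nonoverlapping_intervals_def)
      then show "norm (f (v k) - f (u k)) \<le> L * (v k - u k)"
        using lipschitz_on_normD[OF L, of "v k" "u k"] by simp
    qed
    also have "\<dots> = L * (\<Sum>k<N. v k - u k)" by (simp add: sum_distrib_left)
    also have "\<dots> \<le> L * (e / (L + 1))" using h L0 by (intro mult_left_mono) auto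
    also have "\<dots> < e" using e L0 by (simp add: field_simps)
    finally show "(\<Sum>k<N. norm (f (v k) - f (u k))) < e" .
  qed
qed

lemma abs_cont_on_compose_lipschitz:
  fixes f :: "real \<Rightarrow> 'a::real_normed_vector" and \<phi> :: "'a \<Rightarrow> 'b::real_normed_vector"
  assumes ac: "abs_cont_on S f" and L: "L-lipschitz_on UNIV \<phi>"
  shows "abs_cont_on S (\<lambda>t. \<phi> (f t))"
  unfolding abs_cont_on_iff
proof (intro allI impI)
  fix e :: real assume e: "e > 0"
  have L0: "L \<ge> 0" using lipschitz_on_nonneg[OF L] .
  then have "e / (L + 1) > 0" using e by simp
  with ac obtain \<delta> where \<delta>: "\<delta> > 0" and P: "\<And>N u v. nonoverlapping_intervals S N u v \<Longrightarrow>
      (\<Sum>k<N. v k - u k) < \<delta> \<Longrightarrow> (\<Sum>k<N. norm (f (v k) - f (u k))) < e / (L + 1)"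
    by (metis abs_cont_onE)
  show "\<exists>\<delta>>0. \<forall>N u v. nonoverlapping_intervals S N u v \<and> (\<Sum>k<N. v k - u k) < \<delta>
        \<longrightarrow> (\<Sum>k<N. norm (\<phi> (f (v k)) - \<phi> (f (u k)))) < e"
  proof (intro exI[of _ \<delta>] conjI allI impI)
    fix N :: nat and u v :: "nat \<Rightarrow> real"
    assume h: "nonoverlapping_intervals S N u v \<and> (\<Sum>k<N. v k - u k) < \<delta>"
    have "(\<Sum>k<N. norm (\<phi> (f (v k)) - \<phi> (f (u k)))) \<le> (\<Sum>k<N. L * norm (f (v k) - f (u k)))"
      by (intro sum_mono lipschitz_on_normD[OF L]) auto
    also have "\<dots> = L * (\<Sum>k<N. norm (f (v k) - f (u k)))" by (simp add: sum_distrib_left)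
    also have "\<dots> \<le> L * (e / (L + 1))" using P[of N u v] h L0 by (intro mult_left_mono) auto
    also have "\<dots> < e" using e L0 by (simp add: field_simps)
    finally show "(\<Sum>k<N. norm (\<phi> (f (v k)) - \<phi> (f (u k)))) < e" .
  qed (rule \<delta>)
qed

lemma abs_cont_on_add:
  fixes f g :: "real \<Rightarrow> 'a::real_normed_vector"
  assumes f: "abs_cont_on S f" and g: "abs_cont_on S g"
  shows "abs_cont_on S (\<lambda>t. f t + g t)"
  unfolding abs_cont_on_iff
proof (intro allI impI)
  fix e :: real assume e: "e > 0"
  then have "e / 2 > 0" by simp
  obtain \<delta>f where \<delta>f: "\<delta>f > 0" and Pf: "\<And>N u v. nonoverlapping_intervals S N u v \<Longrightarrow>
      (\<Sum>k<N. v k - u k) < \<delta>f \<Longrightarrow> (\<Sum>k<N. norm (f (v k) - f (u k))) < e / 2"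
    using f \<open>e / 2 > 0\<close> by (rule abs_cont_onE) blast
  obtain \<delta>g where \<delta>g: "\<delta>g > 0" and Pg: "\<And>N u v. nonoverlapping_intervals S N u v \<Longrightarrow>
      (\<Sum>k<N. v k - u k) < \<delta>g \<Longrightarrow> (\<Sum>k<N. norm (g (v k) - g (u k))) < e / 2"
    using g \<open>e / 2 > 0\<close> by (rule abs_cont_onE) blast
  show "\<exists>\<delta>>0. \<forall>N u v. nonoverlapping_intervals S N u v \<and> (\<Sum>k<N. v k - u k) < \<delta>
        \<longrightarrow> (\<Sum>k<N. norm ((f (v k) + g (v k)) - (f (u k) + g (u k)))) < e"
  proof (intro exI[of _ "min \<delta>f \<delta>g"] conjI allI impI)
    fix N :: nat and u v :: "nat \<Rightarrow> real"
    assume h: "nonoverlapping_intervals S N u v \<and> (\<Sum>k<N. v k - u k) < min \<delta>f \<delta>g"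
    have "(\<Sum>k<N. norm ((f (v k) + g (v k)) - (f (u k) + g (u k))))
        \<le> (\<Sum>k<N. norm (f (v k) - f (u k)) + norm (g (v k) - g (u k)))"
      by (intro sum_mono) (simp add: norm_diff_triangle_ineq)
    also have "\<dots> < e / 2 + e / 2"
      unfolding sum.distrib using Pf Pg h by (intro add_strict_mono) auto
    finally show "(\<Sum>k<N. norm ((f (v k) + g (v k)) - (f (u k) + g (u k)))) < e" by simp
  qed (use \<delta>f \<delta>g in simp)
qed

lemma abs_cont_on_finite_family:
  assumes ac: "abs_cont_on S f" and e: "e > 0"
  shows "\<exists>\<delta>>0. \<forall>(I :: 'i set) u v. finite I \<longrightarrow> (\<forall>k\<in>I. u k \<in> S \<and> v k \<in> S \<and> u k \<le> v k) \<longrightarrow>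
    (\<forall>j\<in>I. \<forall>k\<in>I. j \<noteq> k \<longrightarrow> v j \<le> u k \<or> v k \<le> u j) \<longrightarrow> (\<Sum>k\<in>I. v k - u k) < \<delta> \<longrightarrow>
    (\<Sum>k\<in>I. norm (f (v k) - f (u k))) < e"
proof -
  obtain \<delta> where \<delta>: "\<delta> > 0" and P: "\<And>N u v. nonoverlapping_intervals S N u v \<Longrightarrow>
      (\<Sum>k<N. v k - u k) < \<delta> \<Longrightarrow> (\<Sum>k<N. norm (f (v k) - f (u k))) < e"
    using ac e by (rule abs_cont_onE) blast
  have "(\<Sum>k\<in>I. norm (f (v k) - f (u k))) < e"
    if I: "finite I" "\<forall>k\<in>I. u k \<in> S \<and> v k \<in> S \<and> u k \<le> v k"
      "\<forall>j\<in>I. \<forall>k\<in>I. j \<noteq> k \<longrightarrow> v j \<le> u k \<or> v k \<le> u j" "(\<Sum>k\<in>I. v k - u k) < \<delta>"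
    for I :: "'i set" and u v
  proof -
    obtain h where h: "bij_betw h {..<card I} I"
      using ex_bij_betw_nat_finite[OF I(1)] by (auto simp: atLeast0LessThan)
    have sum_h: "(\<Sum>k\<in>I. g k) = (\<Sum>n<card I. g (h n))" for g :: "'i \<Rightarrow> real"
      using sum.reindex_bij_betw[OF h, of g] by simp
    have "nonoverlapping_intervals S (card I) (u \<circ> h) (v \<circ> h)"
      using I(2,3) bij_betwE[OF h] bij_betw_imp_inj_on[OF h]
      unfolding nonoverlapping_intervals_def inj_on_def by (simp add: Ball_def) metis
    moreover have "(\<Sum>n<card I. (v \<circ> h) n - (u \<circ> h) n) < \<delta>" using I(4) sum_h by simp
    ultimately show ?thesis using P sum_h by fastforce
  qed
  with \<delta> show ?thesis by blast
qed

lemma sum_interval_lengths_le_measure: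
  fixes u v :: "'i \<Rightarrow> real"
  assumes I: "finite I" and sub: "\<And>k. k \<in> I \<Longrightarrow> u k \<le> v k \<and> {u k..v k} \<subseteq> T"
    and disj: "\<And>j k. j \<in> I \<Longrightarrow> k \<in> I \<Longrightarrow> j \<noteq> k \<Longrightarrow> v j \<le> u k \<or> v k \<le> u j"
    and T: "T \<in> lmeasurable"
  shows "(\<Sum>k\<in>I. v k - u k) \<le> measure lebesgue T"
proof -
  have "pairwise (\<lambda>j k. negligible ({u j..v j} \<inter> {u k..v k})) I"
  proof (rule pairwiseI)
    fix j k assume "j \<in> I" "k \<in> I" "j \<noteq> k"
    then have "{u j..v j} \<inter> {u k..v k} \<subseteq> {u k} \<or> {u j..v j} \<inter> {u k..v k} \<subseteq> {u j}"
      using disj by fastforce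
    then show "negligible ({u j..v j} \<inter> {u k..v k})"
      by (metis negligible_sing negligible_subset)
  qed
  then have "measure lebesgue (\<Union>k\<in>I. {u k..v k}) = (\<Sum>k\<in>I. measure lebesgue {u k..v k})"
    using I by (intro measure_negligible_finite_Union_image) auto
  also have "\<dots> = (\<Sum>k\<in>I. v k - u k)" using sub by (intro sum.cong) auto
  finally have "(\<Sum>k\<in>I. v k - u k) = measure lebesgue (\<Union>k\<in>I. {u k..v k})" ..
  also have "\<dots> \<le> measure lebesgue T" using sub T I by (intro measure_mono_fmeasurable) auto
  finally show ?thesis .
qed

lemma lebesgue_null_set_open_cover:
  assumes E: "E \<in> null_sets lebesgue" and \<delta>: "\<delta> > 0"
  obtains T where "open T" "E \<subseteq> T" "T \<in> lmeasurable" "measure lebesgue T < \<delta>"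
proof -
  obtain T where T: "open T" "E \<subseteq> T" "T - E \<in> lmeasurable" "emeasure lebesgue (T - E) < ennreal \<delta>"
    using sets_lebesgue_outer_open[of E \<delta>] E \<delta> by auto
  have "T = (T - E) \<union> E" using T(2) by blast
  then have Tm: "T \<in> lmeasurable" by (metis T(3) E fmeasurableI_null_sets fmeasurable.Un)
  have "measure lebesgue T = measure lebesgue (T - E)"
    using measure_Diff_null_set[of T lebesgue E] Tm E by (simp add: fmeasurable_def)
  also have "\<dots> < \<delta>" using T(3,4) \<delta> by (simp add: emeasure_eq_measure2 ennreal_less_iff)
  finally show thesis using that T(1,2) Tm by blast
qed

lemma nonpos_derivative_local_increment:
  fixes f :: "real \<Rightarrow> real"
  assumes "(f has_real_derivative d) (at t)" "d \<le> 0" "e > 0"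
  shows "\<exists>r>0. \<forall>s. \<bar>s - t\<bar> < r \<longrightarrow>
    (t \<le> s \<longrightarrow> f s - f t \<le> e * (s - t)) \<and> (s \<le> t \<longrightarrow> f t - f s \<le> e * (t - s))"
proof -
  from assms(1) have "(f has_derivative (\<lambda>h. d * h)) (at t)" by (simp add: has_field_derivative_def)
  then obtain r where r: "r > 0" "\<forall>s. norm (s - t) < r \<longrightarrow> norm (f s - f t - d * (s - t)) \<le> e * norm (s - t)"
    using has_derivative_at_alt assms(3) by blast
  have "(t \<le> s \<longrightarrow> f s - f t \<le> e * (s - t)) \<and> (s \<le> t \<longrightarrow> f t - f s \<le> e * (t - s))"
    if "\<bar>s - t\<bar> < r" for s
  proof -
    have "\<bar>f s - f t - d * (s - t)\<bar> \<le> e * \<bar>s - t\<bar>" using r that by auto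
    then show ?thesis
      using mult_nonpos_nonneg[OF assms(2), of "s - t"] mult_nonpos_nonpos[OF assms(2), of "s - t"] by auto
  qed
  with r(1) show ?thesis by blast
qed

lemma tagged_division_real_intervalD:
  assumes "p tagged_division_of {a..b::real}" "(t, K) \<in> p"
  shows "K = {Inf K..Sup K} \<and> Inf K \<le> t \<and> t \<le> Sup K \<and> K \<subseteq> {a..b}"
proof -
  obtain u v where K: "K = cbox u v" using tagged_division_ofD(4)[OF assms] by blast
  have "t \<in> K" using tagged_division_ofD(2)[OF assms] .
  then show ?thesis using K tagged_division_ofD(3)[OF assms] by auto
qed

text \<open>The subintervals tagged inside an open set of measure \<open>< \<delta>\<close> form a nonoverlapping family of
  total length \<open>< \<delta>\<close>, so absolute continuity bounds the total increment over them.\<close>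

lemma tagged_division_increment_tags_in_open:
  fixes f :: "real \<Rightarrow> real"
  assumes p: "p tagged_division_of {a..b}" and inT: "\<And>t K. (t, K) \<in> p \<Longrightarrow> t \<in> T \<Longrightarrow> K \<subseteq> T"
    and T: "T \<in> lmeasurable" "measure lebesgue T < \<delta>"
    and small: "\<forall>(I :: (real \<times> real set) set) u v. finite I \<longrightarrow>
      (\<forall>k\<in>I. u k \<in> {a..b} \<and> v k \<in> {a..b} \<and> u k \<le> v k) \<longrightarrow>
      (\<forall>j\<in>I. \<forall>k\<in>I. j \<noteq> k \<longrightarrow> v j \<le> u k \<or> v k \<le> u j) \<longrightarrow> (\<Sum>k\<in>I. v k - u k) < \<delta> \<longrightarrow>
      (\<Sum>k\<in>I. norm (f (v k) - f (u k))) < e"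
  shows "(\<Sum>(t, K)\<in>p. if t \<in> T then f (Sup K) - f (Inf K) else 0) < e"
proof -
  have fin: "finite p" using p by blast
  define p1 where "p1 = {q\<in>p. fst q \<in> T \<and> Inf (snd q) < Sup (snd q)}"
  have "(\<Sum>(t, K)\<in>p. if t \<in> T then f (Sup K) - f (Inf K) else 0)
      = (\<Sum>q\<in>p. if q \<in> p1 then f (Sup (snd q)) - f (Inf (snd q)) else 0)"
  proof (rule sum.cong)
    fix q assume q: "q \<in> p"
    then have "Inf (snd q) \<le> Sup (snd q)" using tagged_division_real_intervalD[OF p, of "fst q" "snd q"] by auto
    then show "(case q of (t, K) \<Rightarrow> if t \<in> T then f (Sup K) - f (Inf K) else 0)
        = (if q \<in> p1 then f (Sup (snd q)) - f (Inf (snd q)) else 0)"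
      using q unfolding p1_def by (auto simp: less_le split_beta)
  qed simp
  also have "\<dots> = (\<Sum>q\<in>p1. f (Sup (snd q)) - f (Inf (snd q)))"
    using fin by (simp add: sum.inter_filter[symmetric] p1_def)
  also have "\<dots> \<le> (\<Sum>q\<in>p1. norm (f (Sup (snd q)) - f (Inf (snd q))))" by (intro sum_mono) simp
  also have "\<dots> < e"
  proof (rule small[rule_format, of p1 "\<lambda>q. Inf (snd q)" "\<lambda>q. Sup (snd q)"])
    show fin1: "finite p1" using fin unfolding p1_def by simp
    have sub: "Inf (snd q) < Sup (snd q) \<and> Inf (snd q) \<in> {a..b} \<and> Sup (snd q) \<in> {a..b} \<and>
        snd q = {Inf (snd q)..Sup (snd q)} \<and> snd q \<subseteq> T" if q: "q \<in> p1" for q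
    proof -
      obtain t K where tK: "q = (t, K)" "(t, K) \<in> p" "t \<in> T" "Inf K < Sup K"
        using q unfolding p1_def by (cases q) auto
      note K = tagged_division_real_intervalD[OF p tK(2)]
      then have "Inf K \<in> K" "Sup K \<in> K" using tK(4) by auto
      then show ?thesis using K tK inT[OF tK(2,3)] by auto
    qed
    show "Inf (snd q) \<in> {a..b} \<and> Sup (snd q) \<in> {a..b} \<and> Inf (snd q) \<le> Sup (snd q)"
      if "q \<in> p1" for q
      using sub[OF that] by (simp add: less_imp_le)
    show disj: "Sup (snd j) \<le> Inf (snd k) \<or> Sup (snd k) \<le> Inf (snd j)"
      if jk: "j \<in> p1" "k \<in> p1" "j \<noteq> k" for j k
    proof -
      have "interior (snd j) \<inter> interior (snd k) = {}"
        using tagged_division_ofD(5)[OF p, of "fst j" "snd j" "fst k" "snd k"] jk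
        unfolding p1_def by auto
      then have "{Inf (snd j)<..<Sup (snd j)} \<inter> {Inf (snd k)<..<Sup (snd k)} = {}"
        using sub[OF jk(1)] sub[OF jk(2)] by (metis interior_atLeastAtMost_real)
      then show ?thesis using sub[OF jk(1)] sub[OF jk(2)] by (auto simp: not_le)
    qed
    have "(\<Sum>q\<in>p1. Sup (snd q) - Inf (snd q)) \<le> measure lebesgue T"
      using fin1 sub disj T(1) by (intro sum_interval_lengths_le_measure) (auto simp: less_imp_le)
    then show "(\<Sum>q\<in>p1. Sup (snd q) - Inf (snd q)) < \<delta>" using T(2) by simp
  qed
  finally show ?thesis .
qed

lemma nonpos_derivative_gauge:
  fixes f :: "real \<Rightarrow> real"
  assumes T: "open T" and e: "e > 0"
    and deriv: "\<And>t. t \<notin> T \<Longrightarrow> a < t \<Longrightarrow> t < b \<Longrightarrow> \<exists>d. (f has_real_derivative d) (at t) \<and> d \<le> 0"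
  shows "\<exists>r. \<forall>t. r t > 0 \<and> (t \<in> T \<longrightarrow> ball t (r t) \<subseteq> T) \<and> (t \<notin> T \<and> a < t \<and> t < b \<longrightarrow>
    (\<forall>s. \<bar>s - t\<bar> < r t \<longrightarrow> (t \<le> s \<longrightarrow> f s - f t \<le> e * (s - t)) \<and> (s \<le> t \<longrightarrow> f t - f s \<le> e * (t - s))))"
proof -
  define P where "P t r \<longleftrightarrow> r > 0 \<and> (t \<in> T \<longrightarrow> ball t r \<subseteq> T) \<and> (t \<notin> T \<and> a < t \<and> t < b \<longrightarrow>
      (\<forall>s. \<bar>s - t\<bar> < r \<longrightarrow> (t \<le> s \<longrightarrow> f s - f t \<le> e * (s - t)) \<and> (s \<le> t \<longrightarrow> f t - f s \<le> e * (t - s))))"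
    for t r
  have "\<exists>r. P t r" for t
  proof (cases "t \<in> T")
    case True
    then obtain r where "r > 0" "ball t r \<subseteq> T" using T openE by metis
    then show ?thesis using True unfolding P_def by blast
  next
    case False
    show ?thesis
    proof (cases "a < t \<and> t < b")
      case True
      then obtain d where "(f has_real_derivative d) (at t)" "d \<le> 0" using deriv False by blast
      from nonpos_derivative_local_increment[OF this e] show ?thesis using False unfolding P_def by blast
    next
      case False2: False
      then show ?thesis using False unfolding P_def by (intro exI[of _ 1]) auto
    qed
  qed
  then have "\<exists>r. \<forall>t. P t (r t)" by (intro choice allI)
  then show ?thesis unfolding P_def .
qed

lemma abs_cont_on_nonpos_derivative_increment:
  fixes f :: "real \<Rightarrow> real"
  assumes ab: "a \<le> b" and ac: "abs_cont_on {a..b} f"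
    and ae: "AE t in lborel. a < t \<and> t < b \<longrightarrow> (\<exists>d. (f has_real_derivative d) (at t) \<and> d \<le> 0)"
    and e: "e > 0"
  shows "f b - f a \<le> e * (b - a) + e"
proof -
  obtain \<delta> where \<delta>: "\<delta> > 0" and small: "\<forall>(I :: (real \<times> real set) set) u v. finite I \<longrightarrow>
      (\<forall>k\<in>I. u k \<in> {a..b} \<and> v k \<in> {a..b} \<and> u k \<le> v k) \<longrightarrow>
      (\<forall>j\<in>I. \<forall>k\<in>I. j \<noteq> k \<longrightarrow> v j \<le> u k \<or> v k \<le> u j) \<longrightarrow> (\<Sum>k\<in>I. v k - u k) < \<delta> \<longrightarrow>
      (\<Sum>k\<in>I. norm (f (v k) - f (u k))) < e"
    using abs_cont_on_finite_family[OF ac e] by blast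
  from ae obtain Z where Z: "Z \<in> null_sets lborel"
      "\<And>t. a < t \<Longrightarrow> t < b \<Longrightarrow> t \<notin> Z \<Longrightarrow> \<exists>d. (f has_real_derivative d) (at t) \<and> d \<le> 0"
    unfolding eventually_ae_filter by (force simp: subset_eq)
  have "Z \<union> {a, b} \<in> null_sets lebesgue"
    using Z(1) null_sets_completionI countable_imp_null_set_lborel
    by (metis countable_empty countable_insert null_sets.Un)
  then obtain T where T: "open T" "Z \<union> {a, b} \<subseteq> T" "T \<in> lmeasurable" "measure lebesgue T < \<delta>"
    using \<delta> by (rule lebesgue_null_set_open_cover) blast
  \<comment> \<open>Tags in the small open set T are handled by absolute continuity, all others by the derivative.\<close>
  have "\<exists>r. \<forall>t. r t > 0 \<and> (t \<in> T \<longrightarrow> ball t (r t) \<subseteq> T) \<and> (t \<notin> T \<and> a < t \<and> t < b \<longrightarrow>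
    (\<forall>s. \<bar>s - t\<bar> < r t \<longrightarrow> (t \<le> s \<longrightarrow> f s - f t \<le> e * (s - t)) \<and> (s \<le> t \<longrightarrow> f t - f s \<le> e * (t - s))))"
    using T(1) e by (rule nonpos_derivative_gauge) (use Z(2) T(2) in blast)
  then obtain r where r: "\<And>t. r t > 0" "\<And>t. t \<in> T \<Longrightarrow> ball t (r t) \<subseteq> T"
    "\<And>t s. t \<notin> T \<Longrightarrow> a < t \<Longrightarrow> t < b \<Longrightarrow> \<bar>s - t\<bar> < r t \<Longrightarrow> t \<le> s \<Longrightarrow> f s - f t \<le> e * (s - t)"
    "\<And>t s. t \<notin> T \<Longrightarrow> a < t \<Longrightarrow> t < b \<Longrightarrow> \<bar>s - t\<bar> < r t \<Longrightarrow> s \<le> t \<Longrightarrow> f t - f s \<le> e * (t - s)"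
    by blast
  obtain p where p: "p tagged_division_of {a..b}" "(\<lambda>t. ball t (r t)) fine p"
    using fine_division_exists_real[OF gauge_ball_dependent] r(1) by blast
  have K_ball: "K \<subseteq> ball t (r t)" if "(t, K) \<in> p" for t K using p(2) that unfolding fine_def by blast
  have "f b - f a = (\<Sum>(t, K)\<in>p. f (Sup K) - f (Inf K))"
    using additive_tagged_division_1[OF ab p(1), of f] by simp
  also have "\<dots> = (\<Sum>(t, K)\<in>p. if t \<in> T then f (Sup K) - f (Inf K) else 0)
      + (\<Sum>(t, K)\<in>p. if t \<in> T then 0 else f (Sup K) - f (Inf K))"
    by (auto simp: sum.distrib[symmetric] split_beta intro!: sum.cong)
  also have "(\<Sum>(t, K)\<in>p. if t \<in> T then 0 else f (Sup K) - f (Inf K)) \<le> (\<Sum>(t, K)\<in>p. e * (Sup K - Inf K))"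
  proof (rule sum_mono)
    fix q assume q: "q \<in> p"
    obtain t K where tK: "q = (t, K)" by fastforce
    have K: "K = {Inf K..Sup K}" "Inf K \<le> t" "t \<le> Sup K" "K \<subseteq> {a..b}" "K \<subseteq> ball t (r t)"
      using tagged_division_real_intervalD[OF p(1)] K_ball q tK by blast+
    show "(case q of (t, K) \<Rightarrow> if t \<in> T then 0 else f (Sup K) - f (Inf K)) \<le> (case q of (t, K) \<Rightarrow> e * (Sup K - Inf K))"
    proof (cases "t \<in> T")
      case False
      then have "a < t" "t < b" using K T(2) by (metis atLeastAtMost_iff insert_subset le_less subset_eq Un_subset_iff)+
      moreover have "Sup K \<in> K" "Inf K \<in> K" using K(1-3) by (metis atLeastAtMost_iff order_trans order_refl)+
      then have "\<bar>Sup K - t\<bar> < r t" "\<bar>Inf K - t\<bar> < r t"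
        using K(5) by (auto simp: subset_eq dist_real_def abs_minus_commute)
      ultimately have "f (Sup K) - f t \<le> e * (Sup K - t)" "f t - f (Inf K) \<le> e * (t - Inf K)"
        using r(3,4) False K(2,3) by blast+
      then show ?thesis using False tK by (auto simp: algebra_simps)
    qed (use tK K e in auto)
  qed
  also have "\<dots> = e * (b - a)"
    using additive_tagged_division_1[OF ab p(1), of "\<lambda>x. x"]
    by (simp add: sum_distrib_left[symmetric] split_beta)
  also have "(\<Sum>(t, K)\<in>p. if t \<in> T then f (Sup K) - f (Inf K) else 0) < e"
    using p(1) _ T(3,4) small
  proof (rule tagged_division_increment_tags_in_open)
    show "K \<subseteq> T" if "(t, K) \<in> p" "t \<in> T" for t K using K_ball[OF that(1)] r(2)[OF that(2)] by blast
  qed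
  finally show ?thesis by simp
qed

lemma abs_cont_on_nonpos_derivative_imp_le:
  fixes f :: "real \<Rightarrow> real"
  assumes ab: "a \<le> b" and ac: "abs_cont_on {a..b} f"
    and ae: "AE t in lborel. a < t \<and> t < b \<longrightarrow> (\<exists>d. (f has_real_derivative d) (at t) \<and> d \<le> 0)"
  shows "f b \<le> f a"
proof (rule ccontr)
  assume "\<not> f b \<le> f a"
  then have pos: "f b - f a > 0" by simp
  define e where "e = (f b - f a) / (2 * (b - a + 1))"
  have "e > 0" using pos ab unfolding e_def by auto
  have cancel: "x / (2 * d) * d = x / 2" if "d \<noteq> 0" for x d :: real using that by simp
  have "e * (b - a) + e = e * (b - a + 1)" by (simp add: algebra_simps)
  also have "\<dots> = (f b - f a) / 2" unfolding e_def using ab by (intro cancel) simp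
  finally have "e * (b - a) + e = (f b - f a) / 2" .
  then have "f b - f a \<le> (f b - f a) / 2"
    using abs_cont_on_nonpos_derivative_increment[OF ab ac ae \<open>e > 0\<close>] by simp
  moreover have half: "x \<le> x / 2 \<Longrightarrow> x \<le> 0" for x :: real by linarith
  ultimately show False using half[of "f b - f a"] pos by linarith
qed

lemma lipschitz_on_sum:
  fixes f :: "'i \<Rightarrow> 'a::metric_space \<Rightarrow> 'b::real_normed_vector"
  assumes "finite I" "\<And>i. i \<in> I \<Longrightarrow> (L i)-lipschitz_on U (f i)"
  shows "(\<Sum>i\<in>I. L i)-lipschitz_on U (\<lambda>x. \<Sum>i\<in>I. f i x)"
  using assms by (induction I rule: finite_induct) (auto intro!: lipschitz_on_add lipschitz_on_constant)

lemma countable_isolated_real: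
  fixes Z :: "real set"
  assumes iso: "\<And>t. t \<in> Z \<Longrightarrow> \<exists>r>0. \<forall>s\<in>Z. s \<noteq> t \<longrightarrow> r \<le> \<bar>s - t\<bar>"
  shows "countable Z"
proof -
  define r where "r t = (SOME r. r > 0 \<and> (\<forall>s\<in>Z. s \<noteq> t \<longrightarrow> r \<le> \<bar>s - t\<bar>))" for t
  have r: "r t > 0 \<and> (\<forall>s\<in>Z. s \<noteq> t \<longrightarrow> r t \<le> \<bar>s - t\<bar>)" if "t \<in> Z" for t
    unfolding r_def by (rule someI_ex) (rule iso[OF that])
  define B where "B t = ball t (r t / 2)" for t
  have "inj_on B Z"
  proof (rule inj_onI)
    fix t t' assume tt: "t \<in> Z" "t' \<in> Z" "B t = B t'"
    have "t \<in> B t" using r[OF tt(1)] unfolding B_def by simp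
    then have "\<bar>t - t'\<bar> < r t' / 2" using tt(3) unfolding B_def by (simp add: dist_real_def abs_minus_commute)
    then show "t = t'" using r[OF tt(2)] tt(1) by fastforce
  qed
  moreover have "countable (B ` Z)"
  proof (rule countable_disjoint_open_subsets)
    show "open S" if "S \<in> B ` Z" for S using that unfolding B_def by auto
    show "pairwise disjnt (B ` Z)"
    proof (rule pairwiseI)
      fix S1 S2 assume S: "S1 \<in> B ` Z" "S2 \<in> B ` Z" "S1 \<noteq> S2"
      then obtain t1 t2 where t: "t1 \<in> Z" "t2 \<in> Z" "S1 = B t1" "S2 = B t2" by blast
      then have "t1 \<noteq> t2" using S(3) by blast
      then have d: "r t1 \<le> \<bar>t2 - t1\<bar>" "r t2 \<le> \<bar>t1 - t2\<bar>" using r t by auto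
      show "disjnt S1 S2" unfolding disjnt_def
      proof (rule ccontr)
        assume "S1 \<inter> S2 \<noteq> {}"
        then obtain y where "y \<in> B t1" "y \<in> B t2" using t by blast
        then have "\<bar>y - t1\<bar> < r t1 / 2" "\<bar>y - t2\<bar> < r t2 / 2"
          unfolding B_def by (auto simp: dist_real_def abs_minus_commute)
        then show False using d by linarith
      qed
    qed
  qed
  ultimately show ?thesis using countable_image_inj_on by blast
qed

text \<open>A differentiable function crosses zero with nonzero slope only at isolated points.\<close>

lemma countable_transversal_zeros:
  fixes h :: "real \<Rightarrow> real"
  shows "countable {t. \<exists>d. (h has_real_derivative d) (at t) \<and> h t = 0 \<and> d \<noteq> 0}"
proof (rule countable_isolated_real)
  fix t assume "t \<in> {t. \<exists>d. (h has_real_derivative d) (at t) \<and> h t = 0 \<and> d \<noteq> 0}"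
  then obtain d where d: "(h has_real_derivative d) (at t)" "h t = 0" "d \<noteq> 0" by blast
  then have "(h has_derivative (\<lambda>x. d * x)) (at t)" by (simp add: has_field_derivative_def)
  moreover have "\<bar>d\<bar> / 2 > 0" using d(3) by simp
  ultimately obtain r where r: "r > 0"
      "\<forall>s. norm (s - t) < r \<longrightarrow> norm (h s - h t - d * (s - t)) \<le> (\<bar>d\<bar> / 2) * norm (s - t)"
    using has_derivative_at_alt by blast
  have "r \<le> \<bar>s - t\<bar>" if "h s = 0" "s \<noteq> t" for s
  proof (rule ccontr)
    assume "\<not> r \<le> \<bar>s - t\<bar>"
    then have "\<bar>h s - h t - d * (s - t)\<bar> \<le> (\<bar>d\<bar> / 2) * \<bar>s - t\<bar>" using r(2) by auto
    then have "\<bar>d\<bar> * \<bar>s - t\<bar> \<le> (\<bar>d\<bar> / 2) * \<bar>s - t\<bar>" using that(1) d(2) by (simp add: abs_mult)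
    then show False using that(2) d(3) by (simp add: mult_le_cancel_right)
  qed
  then show "\<exists>r>0. \<forall>s\<in>{t. \<exists>d. (h has_real_derivative d) (at t) \<and> h t = 0 \<and> d \<noteq> 0}. s \<noteq> t \<longrightarrow> r \<le> \<bar>s - t\<bar>"
    using r(1) by blast
qed

lemma AE_derivative_zero_at_zeros:
  fixes h :: "real \<Rightarrow> real"
  shows "AE t in lborel. \<forall>d. (h has_real_derivative d) (at t) \<longrightarrow> h t \<noteq> 0 \<or> d = 0"
proof -
  have "AE t in lborel. t \<notin> {t. \<exists>d. (h has_real_derivative d) (at t) \<and> h t = 0 \<and> d \<noteq> 0}"
    by (rule AE_not_in[OF countable_imp_null_set_lborel[OF countable_transversal_zeros]])
  then show ?thesis by (rule eventually_mono) blast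
qed

lemma abs_cont_finite_time_zero:
  fixes g :: "real \<Rightarrow> real"
  assumes \<kappa>: "\<kappa> > 0" and nonneg: "\<And>t. g t \<ge> 0"
    and ac: "\<And>b. abs_cont_on {t1..b} g"
    and ae: "AE t in lborel. t1 < t \<longrightarrow>
      (\<exists>d. (g has_real_derivative d) (at t) \<and> d \<le> 0 \<and> (g t > 0 \<longrightarrow> d \<le> - \<kappa>))"
    and t: "t1 + g t1 / \<kappa> < t"
  shows "g t = 0"
proof -
  have mono: "g b \<le> g a" if "t1 \<le> a" "a \<le> b" for a b
  proof (rule abs_cont_on_nonpos_derivative_imp_le[OF \<open>a \<le> b\<close>])
    show "abs_cont_on {a..b} g" using ac[of b] by (rule abs_cont_on_subset) (use that in auto)
    show "AE t in lborel. a < t \<and> t < b \<longrightarrow> (\<exists>d. (g has_real_derivative d) (at t) \<and> d \<le> 0)"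
      using ae by (rule eventually_mono) (use that in fastforce)
  qed
  have "g t1 / \<kappa> \<ge> 0" using nonneg[of t1] \<kappa> by simp
  then have "t1 \<le> t" using t by linarith
  show ?thesis
  proof (rule ccontr)
    assume "g t \<noteq> 0"
    then have pos: "g t > 0" using nonneg[of t] by simp
    have "g t + \<kappa> * t \<le> g t1 + \<kappa> * t1"
    proof (rule abs_cont_on_nonpos_derivative_imp_le[OF \<open>t1 \<le> t\<close>, where f = "\<lambda>s. g s + \<kappa> * s"])
      show "abs_cont_on {t1..t} (\<lambda>s. g s + \<kappa> * s)"
        using lipschitz_on_cmult_real[OF lipschitz_on_id, where a = \<kappa>]
        by (intro abs_cont_on_add ac lipschitz_on_imp_abs_cont_on)
      show "AE s in lborel. t1 < s \<and> s < t \<longrightarrow>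
          (\<exists>d. ((\<lambda>s. g s + \<kappa> * s) has_real_derivative d) (at s) \<and> d \<le> 0)"
        using ae
      proof eventually_elim
        case (elim s)
        show ?case
        proof
          assume s: "t1 < s \<and> s < t"
          then obtain d where d: "(g has_real_derivative d) (at s)" "g s > 0 \<longrightarrow> d \<le> - \<kappa>"
            using elim by blast
          have "g s > 0" using mono[of s t] s pos by simp
          then have "((\<lambda>s. g s + \<kappa> * s) has_real_derivative d + \<kappa>) (at s) \<and> d + \<kappa> \<le> 0"
            using d by (auto intro!: derivative_eq_intros)
          then show "\<exists>d. ((\<lambda>s. g s + \<kappa> * s) has_real_derivative d) (at s) \<and> d \<le> 0" by blast
        qed
      qed
    qed
    then have "\<kappa> * (t - t1) < g t1" using pos by (simp add: algebra_simps)
    moreover have "g t1 < \<kappa> * (t - t1)" using t \<kappa> by (simp add: field_simps)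
    ultimately show False by simp
  qed
qed

section \<open>Linear flows\<close>

lemma matrix_vector_mult_norm_bound:
  fixes M :: "real^'n^'m"
  obtains K where "K > 0" "\<And>v. norm (M *v v) \<le> K * norm v"
  using linear_bounded_pos[OF matrix_vector_mul_linear[of M]] by blast

definition mat_iter :: "real^'n^'n \<Rightarrow> nat \<Rightarrow> real^'n \<Rightarrow> real^'n" where
  "mat_iter M n x0 = ((\<lambda>v. M *v v) ^^ n) x0"

text \<open>The solution \<open>t \<mapsto> exp (t M) x0\<close> of \<open>x' = M x\<close>, built componentwise from its power series.\<close>

definition lin_flow :: "real^'n^'n \<Rightarrow> real^'n \<Rightarrow> real \<Rightarrow> real^'n" where
  "lin_flow M x0 t = (\<chi> j. \<Sum>n. (mat_iter M n x0 $ j / fact n) * t ^ n)"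

lemma mat_iter_0 [simp]: "mat_iter M 0 x0 = x0"
  by (simp add: mat_iter_def)

lemma mat_iter_Suc: "mat_iter M (Suc n) x0 = M *v mat_iter M n x0"
  by (simp add: mat_iter_def)

lemma norm_mat_iter_le:
  assumes "K > 0" "\<And>v. norm (M *v v) \<le> K * norm v"
  shows "norm (mat_iter M n x0) \<le> K ^ n * norm x0"
proof (induction n)
  case (Suc n)
  have "norm (mat_iter M (Suc n) x0) \<le> K * norm (mat_iter M n x0)"
    using assms(2) by (simp add: mat_iter_Suc)
  also have "\<dots> \<le> K * (K ^ n * norm x0)" using Suc assms(1) by (simp add: mult_left_mono)
  finally show ?case by simp
qed simp

lemma summable_mat_iter_series: "summable (\<lambda>n. (mat_iter M n x0 $ j / fact n) * t ^ n)"
proof -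
  obtain K where K: "K > 0" "\<And>v. norm (M *v v) \<le> K * norm v"
    using matrix_vector_mult_norm_bound by blast
  have "summable (\<lambda>n. norm x0 * (inverse (fact n) * (K * \<bar>t\<bar>) ^ n))"
    by (intro summable_mult summable_exp)
  then show ?thesis
  proof (rule summable_comparison_test')
    fix n :: nat
    have "\<bar>mat_iter M n x0 $ j\<bar> \<le> K ^ n * norm x0"
      using component_le_norm_cart[of "mat_iter M n x0" j] norm_mat_iter_le[OF K] by (rule order_trans)
    then have "\<bar>mat_iter M n x0 $ j\<bar> * (inverse (fact n) * \<bar>t\<bar> ^ n) \<le> K ^ n * norm x0 * (inverse (fact n) * \<bar>t\<bar> ^ n)"
      by (rule mult_right_mono) simp
    then show "norm ((mat_iter M n x0 $ j / fact n) * t ^ n) \<le> norm x0 * (inverse (fact n) * (K * \<bar>t\<bar>) ^ n)"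
      by (simp add: abs_mult power_abs divide_inverse power_mult_distrib algebra_simps)
  qed
qed

lemma matrix_vector_mult_lin_flow:
  fixes N :: "real^'n^'m"
  shows "(N *v lin_flow M x0 t) $ i = (\<Sum>n. ((N *v mat_iter M n x0) $ i / fact n) * t ^ n)"
proof -
  have "(N *v lin_flow M x0 t) $ i = (\<Sum>j\<in>UNIV. N $ i $ j * (\<Sum>n. (mat_iter M n x0 $ j / fact n) * t ^ n))"
    by (simp add: matrix_vector_mult_def lin_flow_def)
  also have "\<dots> = (\<Sum>j\<in>UNIV. \<Sum>n. N $ i $ j * ((mat_iter M n x0 $ j / fact n) * t ^ n))"
    by (intro sum.cong refl suminf_mult[symmetric] summable_mat_iter_series)
  also have "\<dots> = (\<Sum>n. \<Sum>j\<in>UNIV. N $ i $ j * ((mat_iter M n x0 $ j / fact n) * t ^ n))"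
    by (rule suminf_sum[symmetric]) (intro summable_mult summable_mat_iter_series)
  also have "\<dots> = (\<Sum>n. ((N *v mat_iter M n x0) $ i / fact n) * t ^ n)"
    by (simp add: matrix_vector_mult_def sum_distrib_left sum_distrib_right sum_divide_distrib algebra_simps)
  finally show ?thesis .
qed

lemma lin_flow_0 [simp]: "lin_flow M x0 0 = x0"
proof -
  have "lin_flow M x0 0 $ j = x0 $ j" for j
    using powser_zero[of "\<lambda>n. mat_iter M n x0 $ j / fact n"] by (simp add: lin_flow_def)
  then show ?thesis by (simp add: vec_eq_iff)
qed

lemma has_vector_derivative_lin_flow:
  fixes M :: "real^'n^'n"
  shows "(lin_flow M x0 has_vector_derivative (M *v lin_flow M x0 t)) (at t)"
proof -
  have comp: "((\<lambda>t. lin_flow M x0 t $ j) has_real_derivative (M *v lin_flow M x0 t) $ j) (at t)" for j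
  proof -
    define c where "c n = mat_iter M n x0 $ j / fact n" for n
    have "((\<lambda>t. \<Sum>n. c n * t ^ n) has_real_derivative (\<Sum>n. diffs c n * t ^ n)) (at t)"
      unfolding c_def by (rule termdiffs_strong_converges_everywhere summable_mat_iter_series)+
    moreover have "diffs c n = (M *v mat_iter M n x0) $ j / fact n" for n
      by (simp add: diffs_def c_def mat_iter_Suc divide_simps)
    ultimately have "((\<lambda>t. \<Sum>n. c n * t ^ n) has_real_derivative (M *v lin_flow M x0 t) $ j) (at t)"
      by (simp add: matrix_vector_mult_lin_flow)
    moreover have "(\<lambda>t. lin_flow M x0 t $ j) = (\<lambda>t. \<Sum>n. c n * t ^ n)" by (simp add: lin_flow_def c_def)
    ultimately show ?thesis by simp
  qed
  have expand: "v = (\<Sum>j\<in>UNIV. (v $ j) *\<^sub>R axis j 1)" for v :: "real^'n"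
    using basis_expansion[of v] by (simp add: scalar_mult_eq_scaleR)
  have "((\<lambda>t. \<Sum>j\<in>UNIV. (lin_flow M x0 t $ j) *\<^sub>R (axis j 1 :: real^'n)) has_vector_derivative
        (\<Sum>j\<in>UNIV. ((M *v lin_flow M x0 t) $ j) *\<^sub>R axis j 1)) (at t)"
    using comp by (intro has_vector_derivative_sum has_vector_derivative_scaleR[where g' = 0, simplified]
        has_vector_derivative_const) (simp add: has_real_derivative_iff_has_vector_derivative)
  then show ?thesis by (simp flip: expand)
qed

lemma continuous_on_lin_flow: "continuous_on S (lin_flow M x0)"
  by (intro continuous_at_imp_continuous_on ballI
      has_vector_derivative_continuous[OF has_vector_derivative_lin_flow])

text \<open>\<open>exp (2 K t) \<bar>x t\<bar>\<^sup>2\<close> is nondecreasing when \<open>K\<close> bounds \<open>M\<close>, so the flow cannot reach \<open>0\<close>.\<close>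

lemma lin_flow_nonzero:
  assumes "x0 \<noteq> 0" "t \<ge> 0"
  shows "lin_flow M x0 t \<noteq> 0"
proof -
  obtain K where K: "K > 0" "\<And>v. norm (M *v v) \<le> K * norm v"
    using matrix_vector_mult_norm_bound by blast
  define x where "x = lin_flow M x0"
  define q where "q s = exp (2 * K * s) * (x s \<bullet> x s)" for s
  have "q 0 \<le> q t"
  proof (rule DERIV_nonneg_imp_nondecreasing[OF assms(2)])
    fix s :: real
    have xd: "(x has_vector_derivative (M *v x s)) (at s)"
      unfolding x_def by (rule has_vector_derivative_lin_flow)
    have "((\<lambda>s. x s \<bullet> x s) has_real_derivative 2 * (x s \<bullet> (M *v x s))) (at s)"
      using bounded_bilinear.has_vector_derivative[OF bounded_bilinear_inner xd xd]
      by (simp add: has_real_derivative_iff_has_vector_derivative inner_commute)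
    then have D: "(q has_real_derivative
        exp (2 * K * s) * (2 * K) * (x s \<bullet> x s) + exp (2 * K * s) * (2 * (x s \<bullet> (M *v x s)))) (at s)"
      unfolding q_def by (auto intro!: derivative_eq_intros)
    have "- (x s \<bullet> (M *v x s)) \<le> norm (x s) * norm (M *v x s)"
      using norm_cauchy_schwarz[of "x s" "- (M *v x s)"] by simp
    also have "\<dots> \<le> norm (x s) * (K * norm (x s))" by (intro mult_left_mono K(2)) simp
    finally have "K * (x s \<bullet> x s) + x s \<bullet> (M *v x s) \<ge> 0"
      by (simp add: dot_square_norm power2_eq_square algebra_simps)
    then have "0 \<le> exp (2 * K * s) * (2 * (K * (x s \<bullet> x s) + x s \<bullet> (M *v x s)))" by simp
    also have "\<dots> = exp (2 * K * s) * (2 * K) * (x s \<bullet> x s) + exp (2 * K * s) * (2 * (x s \<bullet> (M *v x s)))"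
      by (simp add: algebra_simps)
    finally
    show "\<exists>y. (q has_real_derivative y) (at s) \<and> y \<ge> 0" using D by blast
  qed
  moreover have "q 0 > 0" using assms(1) by (simp add: q_def x_def)
  ultimately have "q t > 0" by linarith
  then show ?thesis by (auto simp: q_def x_def)
qed

lemma lin_flow_lipschitz_on:
  fixes M :: "real^'n^'n"
  shows "\<exists>L. L-lipschitz_on {0..a} (lin_flow M x0)"
proof -
  obtain K where K: "K > 0" "\<And>v. norm (M *v v) \<le> K * norm v"
    using matrix_vector_mult_norm_bound by blast
  have "compact (lin_flow M x0 ` {0..a})" by (intro compact_continuous_image continuous_on_lin_flow) simp
  then obtain B where B: "B > 0" "\<And>s. s \<in> {0..a} \<Longrightarrow> norm (lin_flow M x0 s) \<le> B"
    using compact_imp_bounded bounded_pos by (metis imageI)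
  have "(K * B)-lipschitz_on {0..a} (lin_flow M x0)"
  proof (rule bounded_derivative_imp_lipschitz)
    fix s assume "s \<in> {0..a}"
    show "(lin_flow M x0 has_derivative (\<lambda>h. h *\<^sub>R (M *v lin_flow M x0 s))) (at s within {0..a})"
      using has_vector_derivative_lin_flow has_vector_derivative_at_within
      unfolding has_vector_derivative_def by blast
    have "norm (M *v lin_flow M x0 s) \<le> K * B"
      using K B(2)[OF \<open>s \<in> {0..a}\<close>] by (meson mult_left_mono order.trans less_imp_le)
    then show "onorm (\<lambda>h. h *\<^sub>R (M *v lin_flow M x0 s)) \<le> K * B" by (simp add: onorm_scaleR_left onorm_id)
  qed (use K B in auto)
  then show ?thesis ..
qed

lemma lin_flow_in_kernel:
  fixes C :: "real^'n^'p"
  assumes "C ** M = 0" "C *v x0 = 0"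
  shows "C *v lin_flow M x0 t = 0"
proof -
  have "C *v mat_iter M n x0 = 0" for n
    by (cases n) (simp_all add: assms mat_iter_Suc matrix_vector_mul_assoc)
  then show ?thesis by (simp add: vec_eq_iff matrix_vector_mult_lin_flow)
qed

lemma lin_flow_is_sol:
  assumes T: "0 < T" and F: "\<And>t. 0 < t \<Longrightarrow> ereal t < T \<Longrightarrow> M *v lin_flow M x0 t \<in> F (lin_flow M x0 t)"
  shows "is_sol F (lin_flow M x0) T"
  unfolding is_sol_def
proof (intro conjI allI impI AE_I2)
  fix t :: real
  obtain L where "L-lipschitz_on {0..t} (lin_flow M x0)" using lin_flow_lipschitz_on by blast
  then show "abs_cont_on {0..t} (lin_flow M x0)" by (rule lipschitz_on_imp_abs_cont_on)
  assume "0 < t \<and> ereal t < T"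
  then show "\<exists>v. (lin_flow M x0 has_vector_derivative v) (at t) \<and> v \<in> F (lin_flow M x0 t)"
    using has_vector_derivative_lin_flow F by blast
qed (rule T)

section \<open>Krasovskii sets near the origin\<close>

lemma kras_subset_interval:
  assumes "\<delta> > 0" and "\<And>s'. s - \<delta> \<le> s' \<Longrightarrow> s' \<le> s + \<delta> \<Longrightarrow> f s' \<in> {lo..hi}"
  shows "kras f s \<subseteq> {lo..hi}"
proof -
  have "kras f s \<subseteq> closure (convex hull (f ` {s - \<delta> .. s + \<delta>}))"
    unfolding kras_def using assms(1) by blast
  also have "\<dots> \<subseteq> {lo..hi}"
    by (intro closure_minimal hull_minimal) (use assms(2) in auto)
  finally show ?thesis .
qed

lemma kras_zero_contains_interval:
  fixes f :: "real \<Rightarrow> real"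
  assumes r: "(f \<longlongrightarrow> l1) (at_right 0)" "l1 > 0" and l: "(f \<longlongrightarrow> l2) (at_left 0)" "l2 < 0"
  shows "\<exists>c>0. {-c..c} \<subseteq> kras f 0"
proof -
  define c where "c = min (l1 / 2) (- l2 / 2)"
  have "{-c..c} \<subseteq> closure (convex hull (f ` {0 - \<delta> .. 0 + \<delta>}))" if "\<delta> > 0" for \<delta>
  proof -
    have "eventually (\<lambda>s. f s > l1 / 2) (at_right 0)" by (rule order_tendstoD(1)[OF r(1)]) (use r(2) in simp)
    then obtain b1 where b1: "b1 > 0" "\<And>s. 0 < s \<Longrightarrow> s < b1 \<Longrightarrow> f s > l1 / 2"
      unfolding eventually_at_right_field by auto
    have "eventually (\<lambda>s. f s < l2 / 2) (at_left 0)" by (rule order_tendstoD(2)[OF l(1)]) (use l(2) in simp)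
    then obtain b2 where b2: "b2 < 0" "\<And>s. b2 < s \<Longrightarrow> s < 0 \<Longrightarrow> f s < l2 / 2"
      unfolding eventually_at_left_field by auto
    define s1 where "s1 = min b1 \<delta> / 2"
    define s2 where "s2 = max b2 (- \<delta>) / 2"
    have s1: "f s1 > l1 / 2" "s1 \<in> {0 - \<delta> .. 0 + \<delta>}" using b1 that unfolding s1_def by auto
    have s2: "f s2 < l2 / 2" "s2 \<in> {0 - \<delta> .. 0 + \<delta>}" using b2 that unfolding s2_def by auto
    have "{-c..c} \<subseteq> closed_segment (f s2) (f s1)"
      using s1 s2 l(2) r(2) unfolding c_def by (auto simp: closed_segment_eq_real_ivl)
    also have "\<dots> \<subseteq> convex hull (f ` {0 - \<delta> .. 0 + \<delta>})"
      by (intro closed_segment_subset_convex_hull hull_inc) (use s1 s2 in auto)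
    also have "\<dots> \<subseteq> closure (convex hull (f ` {0 - \<delta> .. 0 + \<delta>}))" by (rule closure_subset)
    finally show ?thesis .
  qed
  then have "{-c..c} \<subseteq> kras f 0" unfolding kras_def by blast
  moreover have "c > 0" using r(2) l(2) unfolding c_def by simp
  ultimately show ?thesis by blast
qed

lemma kras_vec_zero_contains_box:
  fixes psi :: "'p::finite \<Rightarrow> real \<Rightarrow> real"
  assumes "\<And>i. (\<exists>l>0. (psi i \<longlongrightarrow> l) (at_right 0)) \<and> (\<exists>l<0. (psi i \<longlongrightarrow> l) (at_left 0))"
  shows "\<exists>c>0. \<forall>w. (\<forall>i. \<bar>w $ i\<bar> \<le> c) \<longrightarrow> w \<in> kras_vec psi 0"
proof -
  have "\<forall>i. \<exists>c>0. {-c..c} \<subseteq> kras (psi i) 0"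
    using assms kras_zero_contains_interval by metis
  then obtain cf where cf: "\<And>i. cf i > 0" "\<And>i. {-cf i..cf i} \<subseteq> kras (psi i) 0" by metis
  define c where "c = Min (range cf)"
  have "c \<le> cf i" for i unfolding c_def by (rule Min_le) auto
  then have "w \<in> kras_vec psi 0" if w: "\<forall>i. \<bar>w $ i\<bar> \<le> c" for w
  proof -
    have "w $ i \<in> {-cf i..cf i}" for i
    proof -
      have "\<bar>w $ i\<bar> \<le> cf i" using w \<open>c \<le> cf i\<close> by (meson order_trans)
      then show ?thesis by (simp add: abs_le_iff)
    qed
    then have "w $ i \<in> kras (psi i) 0" for i using cf(2) by blast
    then show ?thesis unfolding kras_vec_def by simp
  qed
  moreover have "c > 0" unfolding c_def using cf(1) by simp
  ultimately show ?thesis by blast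
qed

lemma kras_near_zero:
  fixes f :: "real \<Rightarrow> real"
  assumes lp: "(f \<longlongrightarrow> lp) (at_right 0)" and lm: "(f \<longlongrightarrow> lm) (at_left 0)" and \<epsilon>: "\<epsilon> > 0"
  shows "\<exists>\<eta>>0. \<forall>s. (0 < s \<and> s < \<eta> \<longrightarrow> kras f s \<subseteq> {lp - \<epsilon>..lp + \<epsilon>}) \<and>
    (- \<eta> < s \<and> s < 0 \<longrightarrow> kras f s \<subseteq> {lm - \<epsilon>..lm + \<epsilon>}) \<and>
    kras f 0 \<subseteq> {- max (max (\<bar>lp\<bar> + \<epsilon>) (\<bar>lm\<bar> + \<epsilon>)) \<bar>f 0\<bar>..max (max (\<bar>lp\<bar> + \<epsilon>) (\<bar>lm\<bar> + \<epsilon>)) \<bar>f 0\<bar>}"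
proof -
  obtain b1 where b1: "b1 > 0" "\<And>s. 0 < s \<Longrightarrow> s < b1 \<Longrightarrow> dist (f s) lp < \<epsilon>"
    using tendstoD[OF lp \<epsilon>] unfolding eventually_at_right_field by auto
  obtain b2 where b2: "b2 < 0" "\<And>s. b2 < s \<Longrightarrow> s < 0 \<Longrightarrow> dist (f s) lm < \<epsilon>"
    using tendstoD[OF lm \<epsilon>] unfolding eventually_at_left_field by auto
  define \<eta> where "\<eta> = min b1 (- b2)"
  have near_p: "f s \<in> {lp - \<epsilon>..lp + \<epsilon>}" if "0 < s" "s < \<eta>" for s
    using b1(2)[of s] that unfolding \<eta>_def by (auto simp: dist_real_def)
  have near_m: "f s \<in> {lm - \<epsilon>..lm + \<epsilon>}" if "- \<eta> < s" "s < 0" for s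
  proof -
    have "b2 < s" using that unfolding \<eta>_def by linarith
    then show ?thesis using b2(2)[of s] that by (auto simp: dist_real_def)
  qed
  have "kras f s \<subseteq> {lp - \<epsilon>..lp + \<epsilon>}" if s: "0 < s" "s < \<eta>" for s
  proof (rule kras_subset_interval[where \<delta> = "min s (\<eta> - s) / 2"])
    fix s' assume "s - min s (\<eta> - s) / 2 \<le> s'" "s' \<le> s + min s (\<eta> - s) / 2"
    then have "0 < s'" "s' < \<eta>" using s min.cobounded1[of s "\<eta> - s"] min.cobounded2[of s "\<eta> - s"] by argo+
    then show "f s' \<in> {lp - \<epsilon>..lp + \<epsilon>}" by (rule near_p)
  qed (use s in simp)
  moreover have "kras f s \<subseteq> {lm - \<epsilon>..lm + \<epsilon>}" if s: "- \<eta> < s" "s < 0" for s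
  proof (rule kras_subset_interval[where \<delta> = "min (- s) (\<eta> + s) / 2"])
    fix s' assume "s - min (- s) (\<eta> + s) / 2 \<le> s'" "s' \<le> s + min (- s) (\<eta> + s) / 2"
    then have "- \<eta> < s'" "s' < 0"
      using s min.cobounded1[of "- s" "\<eta> + s"] min.cobounded2[of "- s" "\<eta> + s"] by argo+
    then show "f s' \<in> {lm - \<epsilon>..lm + \<epsilon>}" by (rule near_m)
  qed (use s in simp)
  moreover have "kras f 0 \<subseteq> {- max (max (\<bar>lp\<bar> + \<epsilon>) (\<bar>lm\<bar> + \<epsilon>)) \<bar>f 0\<bar>..max (max (\<bar>lp\<bar> + \<epsilon>) (\<bar>lm\<bar> + \<epsilon>)) \<bar>f 0\<bar>}"
  proof (rule kras_subset_interval[where \<delta> = "\<eta> / 2"])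
    fix s assume "0 - \<eta> / 2 \<le> s" "s \<le> 0 + \<eta> / 2"
    moreover have "\<eta> > 0" using b1(1) b2(1) unfolding \<eta>_def by simp
    ultimately consider "0 < s" "s < \<eta>" | "- \<eta> < s" "s < 0" | "s = 0" by fastforce
    then show "f s \<in> {- max (max (\<bar>lp\<bar> + \<epsilon>) (\<bar>lm\<bar> + \<epsilon>)) \<bar>f 0\<bar>..max (max (\<bar>lp\<bar> + \<epsilon>) (\<bar>lm\<bar> + \<epsilon>)) \<bar>f 0\<bar>}"
    proof cases
      case 1
      then show ?thesis using near_p[OF 1] by (auto simp: abs_le_iff)
    next
      case 2
      then show ?thesis using near_m[OF 2] by (auto simp: abs_le_iff)
    qed (auto simp: abs_le_iff)
  qed (use b1(1) b2(1) \<eta>_def in simp)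
  moreover have "\<eta> > 0" using b1(1) b2(1) unfolding \<eta>_def by simp
  ultimately show ?thesis by blast
qed

lemma kras_vec_near_zero:
  fixes psi :: "'p::finite \<Rightarrow> real \<Rightarrow> real"
  assumes lp: "\<And>i. (psi i \<longlongrightarrow> lp i) (at_right 0)" and lm: "\<And>i. (psi i \<longlongrightarrow> lm i) (at_left 0)"
    and \<epsilon>: "0 < \<epsilon>" "\<epsilon> \<le> 1"
    and W: "\<And>i. \<bar>lp i\<bar> + 1 \<le> W" "\<And>i. \<bar>lm i\<bar> + 1 \<le> W" "\<And>i. \<bar>psi i 0\<bar> \<le> W"
  shows "\<exists>\<eta>>0. \<forall>y w. (\<forall>i. \<bar>y $ i\<bar> < \<eta>) \<longrightarrow> w \<in> kras_vec psi y \<longrightarrow> (\<forall>i. \<bar>w $ i\<bar> \<le> W \<and>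
    (y $ i > 0 \<longrightarrow> \<bar>w $ i - lp i\<bar> \<le> \<epsilon>) \<and> (y $ i < 0 \<longrightarrow> \<bar>w $ i - lm i\<bar> \<le> \<epsilon>))"
proof -
  have "\<forall>i. \<exists>\<eta>>0. \<forall>s. (0 < s \<and> s < \<eta> \<longrightarrow> kras (psi i) s \<subseteq> {lp i - \<epsilon>..lp i + \<epsilon>}) \<and>
      (- \<eta> < s \<and> s < 0 \<longrightarrow> kras (psi i) s \<subseteq> {lm i - \<epsilon>..lm i + \<epsilon>}) \<and> kras (psi i) 0 \<subseteq> {-W..W}"
  proof
    fix i
    have "{- max (max (\<bar>lp i\<bar> + \<epsilon>) (\<bar>lm i\<bar> + \<epsilon>)) \<bar>psi i 0\<bar>..max (max (\<bar>lp i\<bar> + \<epsilon>) (\<bar>lm i\<bar> + \<epsilon>)) \<bar>psi i 0\<bar>}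
        \<subseteq> {-W..W}"
      using W[of i] \<epsilon>(2) by auto
    then show "\<exists>\<eta>>0. \<forall>s. (0 < s \<and> s < \<eta> \<longrightarrow> kras (psi i) s \<subseteq> {lp i - \<epsilon>..lp i + \<epsilon>}) \<and>
        (- \<eta> < s \<and> s < 0 \<longrightarrow> kras (psi i) s \<subseteq> {lm i - \<epsilon>..lm i + \<epsilon>}) \<and> kras (psi i) 0 \<subseteq> {-W..W}"
      using kras_near_zero[OF lp lm \<epsilon>(1)] by (meson order_trans)
  qed
  then obtain \<eta>f where \<eta>f: "\<And>i. \<eta>f i > 0"
    "\<And>i s. 0 < s \<Longrightarrow> s < \<eta>f i \<Longrightarrow> kras (psi i) s \<subseteq> {lp i - \<epsilon>..lp i + \<epsilon>}"
    "\<And>i s. - \<eta>f i < s \<Longrightarrow> s < 0 \<Longrightarrow> kras (psi i) s \<subseteq> {lm i - \<epsilon>..lm i + \<epsilon>}"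
    "\<And>i. kras (psi i) 0 \<subseteq> {-W..W}"
    by metis
  define \<eta> where "\<eta> = Min (range \<eta>f)"
  have "\<eta> \<le> \<eta>f i" for i unfolding \<eta>_def by (rule Min_le) auto
  have "\<bar>w $ i\<bar> \<le> W \<and> (y $ i > 0 \<longrightarrow> \<bar>w $ i - lp i\<bar> \<le> \<epsilon>) \<and> (y $ i < 0 \<longrightarrow> \<bar>w $ i - lm i\<bar> \<le> \<epsilon>)"
    if "\<bar>y $ i\<bar> < \<eta>" "w \<in> kras_vec psi y" for y w i
  proof -
    have wi: "w $ i \<in> kras (psi i) (y $ i)" using that(2) unfolding kras_vec_def by blast
    have y: "\<bar>y $ i\<bar> < \<eta>f i" using that(1) \<open>\<eta> \<le> \<eta>f i\<close> by linarith
    consider "y $ i > 0" | "y $ i < 0" | "y $ i = 0" by linarith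
    then show ?thesis
    proof cases
      case 1
      then have "w $ i \<in> {lp i - \<epsilon>..lp i + \<epsilon>}" using \<eta>f(2)[of "y $ i" i] wi y by auto
      then show ?thesis using 1 W(1)[of i] \<epsilon>(2) abs_ge_self[of "lp i"] abs_ge_minus_self[of "lp i"]
        by (auto simp: abs_le_iff)
    next
      case 2
      then have "w $ i \<in> {lm i - \<epsilon>..lm i + \<epsilon>}" using \<eta>f(3)[of i "y $ i"] wi y by auto
      then show ?thesis using 2 W(2)[of i] \<epsilon>(2) abs_ge_self[of "lm i"] abs_ge_minus_self[of "lm i"]
        by (auto simp: abs_le_iff)
    qed (use \<eta>f(4)[of i] wi in \<open>auto simp: abs_le_iff\<close>)
  qed
  moreover have "\<eta> > 0" unfolding \<eta>_def using \<eta>f(1) by simp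
  ultimately show ?thesis by blast
qed

section \<open>The matrix condition of Assumption 3\<close>

lemma diag_mat_mult: "diag_mat g *v z = (\<chi> i. g $ i * z $ i)"
proof -
  have "(diag_mat g *v z) $ i = g $ i * z $ i" for i
  proof -
    have "(diag_mat g *v z) $ i = (\<Sum>j\<in>UNIV. (if i = j then g $ i else 0) * z $ j)"
      unfolding matrix_vector_mult_def diag_mat_def by simp
    also have "\<dots> = (\<Sum>j\<in>UNIV. (if i = j then g $ j * z $ j else 0))" by (rule sum.cong) auto
    finally show ?thesis by simp
  qed
  then show ?thesis by (simp add: vec_eq_iff)
qed

lemma inner_diag_symmetrized_form:
  fixes D :: "real^'p^'p"
  shows "v \<bullet> ((diag_mat g ** D + transpose D ** diag_mat g) *v v) = 2 * (\<Sum>i\<in>UNIV. g $ i * v $ i * (D *v v) $ i)"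
proof -
  have "v \<bullet> (transpose D *v (diag_mat g *v v)) = ((diag_mat g *v v) v* D) \<bullet> v"
    by (simp only: transpose_matrix_vector inner_commute)
  also have "\<dots> = (diag_mat g *v v) \<bullet> (D *v v)" by (rule dot_lmul_matrix)
  finally have "v \<bullet> (transpose D *v (diag_mat g *v v)) = (diag_mat g *v v) \<bullet> (D *v v)" .
  then have "v \<bullet> ((diag_mat g ** D + transpose D ** diag_mat g) *v v)
      = v \<bullet> (diag_mat g *v (D *v v)) + (diag_mat g *v v) \<bullet> (D *v v)"
    by (simp add: matrix_vector_mult_add_rdistrib matrix_vector_mul_assoc inner_add_right)
  then show ?thesis
    by (simp add: diag_mat_mult inner_vec_def sum_distrib_left algebra_simps flip: sum.distrib)
qed

lemma symmetrized_form_pos_imp_injective: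
  fixes D :: "real^'p^'p"
  assumes "\<forall>v. v \<noteq> 0 \<longrightarrow> v \<bullet> ((diag_mat g ** D + transpose D ** diag_mat g) *v v) > 0"
    and "D *v v = 0"
  shows "v = 0"
proof (rule ccontr)
  assume "v \<noteq> 0"
  then have "0 < v \<bullet> ((diag_mat g ** D + transpose D ** diag_mat g) *v v)" using assms(1) by blast
  also have "\<dots> = 0" using inner_diag_symmetrized_form[of v g D] assms(2) by simp
  finally show False by simp
qed

lemma symmetrized_form_coercive:
  fixes D :: "real^'p^'p"
  assumes pd: "\<forall>v. v \<noteq> 0 \<longrightarrow> v \<bullet> ((diag_mat g ** D + transpose D ** diag_mat g) *v v) > 0"
  shows "\<exists>lam>0. \<forall>v. (\<Sum>i\<in>UNIV. g $ i * v $ i * (D *v v) $ i) \<ge> lam * (norm v)\<^sup>2"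
proof -
  define Q where "Q v = (\<Sum>i\<in>UNIV. g $ i * v $ i * (D *v v) $ i)" for v :: "real^'p"
  have Qpos: "Q v > 0" if "v \<noteq> 0" for v
  proof -
    have "0 < v \<bullet> ((diag_mat g ** D + transpose D ** diag_mat g) *v v)" using pd that by blast
    then show ?thesis using inner_diag_symmetrized_form[of v g D] unfolding Q_def by simp
  qed
  have Qhom: "Q (a *\<^sub>R u) = a\<^sup>2 * Q u" for a u
    unfolding Q_def by (simp add: matrix_vector_mult_scaleR sum_distrib_left power2_eq_square algebra_simps)
  have "continuous_on UNIV Q"
    unfolding Q_def by (intro continuous_intros bounded_linear.continuous_on[OF bounded_linear_vec_nth]
        bounded_linear.continuous_on[OF bounded_linear_compose[OF bounded_linear_vec_nth matrix_vector_mul_bounded_linear]])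
  then have "\<exists>v0\<in>sphere 0 1. \<forall>v\<in>sphere 0 1. Q v0 \<le> Q v"
    by (intro continuous_attains_inf) (auto intro: continuous_on_subset)
  then obtain v0 where v0: "norm v0 = 1" "\<And>v. norm v = 1 \<Longrightarrow> Q v0 \<le> Q v" by auto
  have "Q v0 * (norm v)\<^sup>2 \<le> Q v" for v
  proof (cases "v = 0")
    case False
    define u where "u = (1 / norm v) *\<^sub>R v"
    have "norm u = 1" "v = norm v *\<^sub>R u" unfolding u_def using False by simp_all
    then have "Q v = (norm v)\<^sup>2 * Q u" using Qhom by metis
    moreover have "Q v0 \<le> Q u" using v0(2) \<open>norm u = 1\<close> .
    ultimately show ?thesis by (simp add: mult_right_mono mult.commute[of "(norm v)\<^sup>2"])
  qed (simp add: Q_def)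
  moreover have "v0 \<noteq> 0" using v0(1) by auto
  then have "Q v0 > 0" by (rule Qpos)
  ultimately show ?thesis unfolding Q_def by blast
qed

section \<open>Necessity of invertibility\<close>

lemma classKL_antimono: "classKL \<beta> \<Longrightarrow> 0 \<le> r \<Longrightarrow> 0 \<le> t \<Longrightarrow> \<beta> r t \<le> \<beta> r 0"
  unfolding classKL_def monotone_on_def by auto

lemma classKL_small_initial:
  assumes "classKL \<beta>" "R > 0"
  shows "\<exists>s>0. s < R \<and> \<beta> s 0 < R"
proof -
  have "continuous_on {0..} (\<lambda>r. \<beta> r 0)" "\<beta> 0 0 = 0"
    using assms(1) unfolding classKL_def classK_def by auto
  then obtain d where d: "d > 0" "\<And>r. r \<in> {0..} \<Longrightarrow> dist r 0 < d \<Longrightarrow> dist (\<beta> r 0) 0 < R"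
    using assms(2) unfolding continuous_on_iff by (metis atLeast_iff order_refl)
  define s where "s = min (d / 2) (R / 2)"
  have "s > 0" "s < R" "s < d" using d(1) assms(2) unfolding s_def by auto
  then have "\<bar>\<beta> s 0\<bar> < R" using d(2)[of s] by (simp add: dist_real_def)
  then show ?thesis using \<open>s > 0\<close> \<open>s < R\<close> by auto
qed

lemma norm_stays_below:
  fixes x :: "real \<Rightarrow> 'a::real_normed_vector"
  assumes cont: "\<And>t. isCont x t" and x0: "norm (x 0) < R" and b: "b < R"
    and bound: "\<And>\<tau>. 0 < \<tau> \<Longrightarrow> \<forall>t. 0 \<le> t \<and> t < \<tau> \<longrightarrow> norm (x t) < R \<Longrightarrow>
      \<forall>t. 0 \<le> t \<and> t < \<tau> \<longrightarrow> norm (x t) \<le> b"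
    and t: "0 \<le> t"
  shows "norm (x t) < R"
proof (rule ccontr)
  assume nt: "\<not> norm (x t) < R"
  define S where "S = {t. 0 \<le> t \<and> R \<le> norm (x t)}"
  have Sne: "S \<noteq> {}" using t nt unfolding S_def by auto
  have Sbdd: "bdd_below S" unfolding S_def by (rule bdd_belowI[of _ 0]) simp
  have "continuous_on UNIV x" using cont by (simp add: continuous_at_imp_continuous_on)
  then have "closed S" unfolding S_def by (intro closed_Collect_conj closed_Collect_le continuous_intros) auto
  define \<tau> where "\<tau> = Inf S"
  have \<tau>S: "\<tau> \<in> S" unfolding \<tau>_def by (rule closed_contains_Inf[OF Sne Sbdd \<open>closed S\<close>])
  have below: "\<forall>t'. 0 \<le> t' \<and> t' < \<tau> \<longrightarrow> norm (x t') < R"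
  proof (intro allI impI)
    fix t' assume t': "0 \<le> t' \<and> t' < \<tau>"
    show "norm (x t') < R"
    proof (rule ccontr)
      assume "\<not> norm (x t') < R"
      then have "t' \<in> S" using t' unfolding S_def by simp
      then have "\<tau> \<le> t'" unfolding \<tau>_def by (rule cInf_lower[OF _ Sbdd])
      then show False using t' by simp
    qed
  qed
  have "\<tau> \<noteq> 0" using \<tau>S x0 unfolding S_def by auto
  then have "\<tau> > 0" using \<tau>S unfolding S_def by simp
  then have le: "\<forall>t'. 0 \<le> t' \<and> t' < \<tau> \<longrightarrow> norm (x t') \<le> b" using below by (rule bound)
  have "(x \<longlongrightarrow> x \<tau>) (at_left \<tau>)"
    using cont[of \<tau>] unfolding isCont_def by (rule tendsto_mono[OF at_le[OF subset_UNIV]])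
  then have "((\<lambda>t. norm (x t)) \<longlongrightarrow> norm (x \<tau>)) (at_left \<tau>)" by (rule tendsto_norm)
  moreover have "eventually (\<lambda>t. norm (x t) \<le> b) (at_left \<tau>)"
    using eventually_at_left_real[OF \<open>\<tau> > 0\<close>] by (rule eventually_mono) (use le in auto)
  ultimately have "norm (x \<tau>) \<le> b" by (rule tendsto_upperbound) simp
  then show False using \<tau>S b unfolding S_def by simp
qed

lemma right_invertible_not_invertible_kernel:
  fixes C :: "real^'n^'p" and R :: "real^'p^'n"
  assumes CR: "C ** R = mat 1" and nC: "\<not> invertible C"
  shows "\<exists>z. C *v z = 0 \<and> z \<noteq> 0"
proof -
  have "\<not> (\<exists>L. L ** C = mat 1)"
  proof
    assume "\<exists>L. L ** C = mat 1"
    then obtain L where L: "L ** C = mat 1" by blast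
    have "L = L ** (C ** R)" by (simp add: CR)
    also have "\<dots> = (L ** C) ** R" by (rule matrix_mul_assoc)
    finally have "L = R" by (simp add: L)
    then show False using nC L CR unfolding invertible_def by blast
  qed
  then show ?thesis using matrix_left_invertible_ker[of C] by blast
qed

lemma singular_output_invariant_feedback:
  fixes A :: "real^'n^'n" and B :: "real^'p^'n" and C :: "real^'n^'p" and psi :: "'p \<Rightarrow> real \<Rightarrow> real"
  assumes a3: "assumption3 A B C psi" and nC: "\<not> invertible C"
  shows "\<exists>M z R0. C ** M = 0 \<and> C *v z = 0 \<and> z \<noteq> 0 \<and> R0 > 0 \<and>
    (\<forall>x. C *v x = 0 \<and> norm x < R0 \<longrightarrow> M *v x \<in> lure_F A B C psi x)"
proof -
  define D where "D = C ** B"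
  from a3 obtain \<gamma> :: "real^'p"
    where pd: "\<forall>v. v \<noteq> 0 \<longrightarrow> v \<bullet> ((diag_mat \<gamma> ** D + transpose D ** diag_mat \<gamma>) *v v) > 0"
      and lims: "\<And>i. (\<exists>l>0. (psi i \<longlongrightarrow> l) (at_right 0)) \<and> (\<exists>l<0. (psi i \<longlongrightarrow> l) (at_left 0))"
    unfolding assumption3_def Let_def D_def by blast
  have "\<forall>v. D *v v = 0 \<longrightarrow> v = 0" using symmetrized_form_pos_imp_injective[OF pd] by blast
  then obtain Di where "Di ** D = mat 1" using matrix_left_invertible_ker by blast
  then have DDi: "D ** Di = mat 1" using matrix_left_right_inverse by blast
  then have "C ** (B ** Di) = mat 1" by (simp add: matrix_mul_assoc D_def)
  then obtain z where z: "C *v z = 0" "z \<noteq> 0" using right_invertible_not_invertible_kernel nC by blast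
  define K where "K = Di ** (C ** A)"
  define M where "M = A - B ** K"
  have Mv: "M *v v = A *v v - B *v (K *v v)" for v
    by (simp add: M_def matrix_vector_mult_diff_rdistrib matrix_vector_mul_assoc)
  have CM: "C ** M = 0"
  proof (rule matrix_eq[THEN iffD2, rule_format])
    fix v
    have "C *v (B *v (K *v v)) = (D ** Di) *v ((C ** A) *v v)"
      by (simp add: K_def D_def matrix_vector_mul_assoc matrix_mul_assoc)
    also have "\<dots> = C *v (A *v v)" by (simp add: DDi matrix_vector_mul_assoc)
    finally have "C *v (B *v (K *v v)) = C *v (A *v v)" .
    then have "C *v (M *v v) = 0" by (simp add: Mv matrix_vector_mult_diff_distrib)
    then show "(C ** M) *v v = 0 *v v" by (simp add: matrix_vector_mul_assoc)
  qed
  have "\<exists>c>0. \<forall>w. (\<forall>i. \<bar>w $ i\<bar> \<le> c) \<longrightarrow> w \<in> kras_vec psi 0"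
    using lims by (rule kras_vec_zero_contains_box)
  then obtain c where c: "c > 0" "\<forall>w. (\<forall>i. \<bar>w $ i\<bar> \<le> c) \<longrightarrow> w \<in> kras_vec psi 0"
    by blast
  obtain kK where kK: "kK > 0" "\<And>v. norm (K *v v) \<le> kK * norm v"
    using matrix_vector_mult_norm_bound by blast
  define R0 where "R0 = c / kK"
  have "R0 > 0" unfolding R0_def using c kK by simp
  have inF: "M *v x \<in> lure_F A B C psi x" if x: "C *v x = 0" "norm x < R0" for x
  proof -
    have "\<bar>(K *v x) $ i\<bar> \<le> c" for i
    proof -
      have "\<bar>(K *v x) $ i\<bar> \<le> norm (K *v x)" by (rule component_le_norm_cart)
      also have "\<dots> \<le> kK * norm x" by (rule kK(2))
      also have "\<dots> \<le> kK * R0" using x(2) kK(1) by simp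
      finally show ?thesis unfolding R0_def using kK(1) by simp
    qed
    then have "K *v x \<in> kras_vec psi (C *v x)" using c(2) x(1) by simp
    then show ?thesis unfolding lure_F_def using Mv by blast
  qed
  with CM z \<open>R0 > 0\<close> show ?thesis by blast
qed

lemma SFTS_imp_invertible:
  fixes A :: "real^'n^'n" and B :: "real^'p^'n" and C :: "real^'n^'p" and psi :: "'p \<Rightarrow> real \<Rightarrow> real"
  assumes a3: "assumption3 A B C psi" and sf: "SFTS (lure_F A B C psi)"
  shows "invertible C"
proof (rule ccontr)
  assume "\<not> invertible C"
  then obtain M z R0 where CM: "C ** M = 0" and z: "C *v z = 0" "z \<noteq> 0" and "R0 > 0"
    and inF: "\<And>x. C *v x = 0 \<Longrightarrow> norm x < R0 \<Longrightarrow> M *v x \<in> lure_F A B C psi x"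
    using singular_output_invariant_feedback[OF a3] by blast
  have gas: "GAS (lure_F A B C psi)" using a3 unfolding assumption3_def by blast
  from gas obtain \<beta> where \<beta>: "classKL \<beta>"
    "\<And>x T t. is_sol (lure_F A B C psi) x T \<Longrightarrow> 0 \<le> t \<Longrightarrow> ereal t < T \<Longrightarrow> norm (x t) \<le> \<beta> (norm (x 0)) t"
    unfolding GAS_def by blast
  obtain s where s: "s > 0" "s < R0" "\<beta> s 0 < R0" using classKL_small_initial[OF \<beta>(1) \<open>R0 > 0\<close>] by blast
  define x0 where "x0 = (s / norm z) *\<^sub>R z"
  have x0: "norm x0 = s" "C *v x0 = 0" "x0 \<noteq> 0"
    using s(1) z unfolding x0_def by (auto simp: matrix_vector_mult_scaleR)
  define x where "x = lin_flow M x0"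
  have xker: "C *v x t = 0" for t unfolding x_def using CM x0(2) by (rule lin_flow_in_kernel)
  have sol: "is_sol (lure_F A B C psi) x T"
    if T: "0 < T" "\<And>t. 0 < t \<Longrightarrow> ereal t < T \<Longrightarrow> norm (x t) < R0" for T
  proof -
    have "M *v x t \<in> lure_F A B C psi (x t)" if "0 < t" "ereal t < T" for t
      using inF[OF xker T(2)[OF that]] .
    then show ?thesis unfolding x_def by (rule lin_flow_is_sol[OF T(1)])
  qed
  have small: "norm (x t) < R0" if "t \<ge> 0" for t
  proof (rule norm_stays_below[where b = "\<beta> s 0"])
    show "isCont x t" for t unfolding x_def by (rule has_vector_derivative_continuous[OF has_vector_derivative_lin_flow])
    show "norm (x 0) < R0" using s(2) x0(1) by (simp add: x_def)
    fix \<tau> :: real assume "0 < \<tau>" "\<forall>t. 0 \<le> t \<and> t < \<tau> \<longrightarrow> norm (x t) < R0"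
    then have sol\<tau>: "is_sol (lure_F A B C psi) x (ereal \<tau>)" by (intro sol) auto
    show "\<forall>t. 0 \<le> t \<and> t < \<tau> \<longrightarrow> norm (x t) \<le> \<beta> s 0"
    proof (intro allI impI)
      fix t assume t: "0 \<le> t \<and> t < \<tau>"
      then have "norm (x t) \<le> \<beta> (norm (x 0)) t" using \<beta>(2)[OF sol\<tau>] by simp
      also have "\<dots> \<le> \<beta> s 0" using classKL_antimono[OF \<beta>(1)] s(1) x0(1) t by (simp add: x_def)
      finally show "norm (x t) \<le> \<beta> s 0" .
    qed
  qed (use s(3) that in auto)
  have "is_sol (lure_F A B C psi) x \<infinity>" using small by (intro sol) auto
  with sf obtain T0 where "T0 \<ge> 0" "\<forall>t. T0 \<le> t \<and> ereal t < \<infinity> \<longrightarrow> x t = 0"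
    unfolding SFTS_def by blast
  then show False using lin_flow_nonzero[OF x0(3), of T0 M] unfolding x_def by simp
qed

section \<open>The Lyapunov function\<close>

definition hinge :: "real \<Rightarrow> real \<Rightarrow> real \<Rightarrow> real" where
  "hinge a b s = a * max s 0 + b * min s 0"

definition hinge_slope :: "real \<Rightarrow> real \<Rightarrow> real \<Rightarrow> real" where
  "hinge_slope a b s = (if s > 0 then a else if s < 0 then b else 0)"

lemma hinge_zero [simp]: "hinge a b 0 = 0"
  by (simp add: hinge_def)

lemma hinge_nonneg: "a \<ge> 0 \<Longrightarrow> b \<le> 0 \<Longrightarrow> hinge a b s \<ge> 0"
  by (simp add: hinge_def mult_nonpos_nonpos)

lemma hinge_pos: "a > 0 \<Longrightarrow> b < 0 \<Longrightarrow> s \<noteq> 0 \<Longrightarrow> hinge a b s > 0"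
  by (cases "s > 0") (auto simp: hinge_def max_def min_def mult_neg_neg)

lemma hinge_lipschitz: "(\<bar>a\<bar> + \<bar>b\<bar>)-lipschitz_on UNIV (hinge a b)"
proof (rule lipschitz_onI)
  fix z z' :: real
  have "\<bar>max z 0 - max z' 0\<bar> \<le> \<bar>z - z'\<bar>" "\<bar>min z 0 - min z' 0\<bar> \<le> \<bar>z - z'\<bar>"
    by (simp_all add: max_def min_def)
  then have "\<bar>a\<bar> * \<bar>max z 0 - max z' 0\<bar> + \<bar>b\<bar> * \<bar>min z 0 - min z' 0\<bar> \<le> \<bar>a\<bar> * \<bar>z - z'\<bar> + \<bar>b\<bar> * \<bar>z - z'\<bar>"
    by (intro add_mono mult_left_mono) auto
  moreover have "\<bar>a * (max z 0 - max z' 0) + b * (min z 0 - min z' 0)\<bar>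
      \<le> \<bar>a\<bar> * \<bar>max z 0 - max z' 0\<bar> + \<bar>b\<bar> * \<bar>min z 0 - min z' 0\<bar>"
    by (simp add: abs_mult[symmetric] abs_triangle_ineq)
  ultimately have "\<bar>a * (max z 0 - max z' 0) + b * (min z 0 - min z' 0)\<bar> \<le> \<bar>a\<bar> * \<bar>z - z'\<bar> + \<bar>b\<bar> * \<bar>z - z'\<bar>"
    by linarith
  then show "dist (hinge a b z) (hinge a b z') \<le> (\<bar>a\<bar> + \<bar>b\<bar>) * dist z z'"
    by (simp add: hinge_def dist_real_def algebra_simps)
qed simp

lemma has_real_derivative_hinge_comp:
  fixes h :: "real \<Rightarrow> real"
  assumes hd: "(h has_real_derivative dh) (at t)" and alt: "h t \<noteq> 0 \<or> dh = 0"
  shows "((\<lambda>s. hinge a b (h s)) has_real_derivative hinge_slope a b (h t) * dh) (at t)"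
proof -
  have hc: "(h \<longlongrightarrow> h t) (nhds t)"
    using DERIV_isCont[OF hd] by (simp add: isCont_def tendsto_at_iff_tendsto_nhds)
  consider "h t > 0" | "h t < 0" | "h t = 0" by linarith
  then show ?thesis
  proof cases
    case 1
    have ev: "eventually (\<lambda>s. hinge a b (h s) = a * h s) (nhds t)"
      using order_tendstoD(1)[OF hc 1] by (rule eventually_mono) (simp add: hinge_def)
    show ?thesis using DERIV_cmult[OF hd, of a] 1
      unfolding DERIV_cong_ev[OF refl ev refl] by (simp add: hinge_slope_def)
  next
    case 2
    have ev: "eventually (\<lambda>s. hinge a b (h s) = b * h s) (nhds t)"
      using order_tendstoD(2)[OF hc 2] by (rule eventually_mono) (simp add: hinge_def)
    show ?thesis using DERIV_cmult[OF hd, of b] 2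
      unfolding DERIV_cong_ev[OF refl ev refl] by (simp add: hinge_slope_def)
  next
    case 3
    then have "dh = 0" using alt by simp
    then have q: "((\<lambda>s. (h s - h t) / (s - t)) \<longlongrightarrow> 0) (at t)"
      using hd by (simp add: has_field_derivative_iff)
    have "((\<lambda>s. (hinge a b (h s) - hinge a b (h t)) / (s - t)) \<longlongrightarrow> 0) (at t)"
    proof (rule Lim_null_comparison)
      have "\<bar>hinge a b (h s)\<bar> \<le> (\<bar>a\<bar> + \<bar>b\<bar>) * \<bar>h s\<bar>" for s
        using lipschitz_on_normD[OF hinge_lipschitz, of "h s" 0] by simp
      then show "\<forall>\<^sub>F s in at t. norm ((hinge a b (h s) - hinge a b (h t)) / (s - t))
          \<le> (\<bar>a\<bar> + \<bar>b\<bar>) * \<bar>(h s - h t) / (s - t)\<bar>"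
        using 3 by (intro always_eventually allI) (simp add: abs_divide divide_right_mono)
      show "((\<lambda>s. (\<bar>a\<bar> + \<bar>b\<bar>) * \<bar>(h s - h t) / (s - t)\<bar>) \<longlongrightarrow> 0) (at t)"
        using tendsto_mult_right_zero[OF tendsto_rabs_zero[OF q]] by simp
    qed
    then show ?thesis using \<open>dh = 0\<close> by (simp add: has_field_derivative_iff)
  qed
qed

lemma weighted_sum_le:
  fixes g a b :: "real^'p"
  assumes "\<forall>i. g $ i > 0" and "\<And>i. a $ i * b $ i \<le> M"
  shows "(\<Sum>i\<in>UNIV. g $ i * a $ i * b $ i) \<le> (\<Sum>i\<in>UNIV. g $ i) * M"
proof -
  have "(\<Sum>i\<in>UNIV. g $ i * a $ i * b $ i) \<le> (\<Sum>i\<in>UNIV. g $ i * M)"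
  proof (rule sum_mono)
    fix i
    have "g $ i * (a $ i * b $ i) \<le> g $ i * M" using assms by (intro mult_left_mono) (auto simp: less_imp_le)
    then show "g $ i * a $ i * b $ i \<le> g $ i * M" by (simp add: mult.assoc)
  qed
  then show ?thesis by (simp add: sum_distrib_right)
qed

text \<open>The left-hand side is the derivative of the Lyapunov function: \<open>w\<close> is the input and \<open>wh\<close> the
  slope vector of the Lyapunov function, which agrees with \<open>w\<close> up to \<open>\<epsilon>\<close> in every component whose
  output rate \<open>yd\<close> is nonzero.\<close>

lemma slope_sum_estimate:
  fixes g wh w yd Gx :: "real^'p" and D :: "real^'p^'p"
  assumes g: "\<forall>i. g $ i > 0"
    and lam: "(\<Sum>i\<in>UNIV. g $ i * w $ i * (D *v w) $ i) \<ge> lam * (norm w)\<^sup>2" "lam \<ge> 0"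
    and yd: "yd = Gx - D *v w"
    and wb: "\<forall>i. \<bar>w $ i\<bar> \<le> W" and Gxb: "norm Gx \<le> gb"
    and sm1: "(\<Sum>i\<in>UNIV. g $ i) * (W * gb) \<le> lam * c\<^sup>2 / 4"
    and Yb: "\<forall>i. \<bar>yd $ i\<bar> \<le> Y"
    and sm2: "(\<Sum>i\<in>UNIV. g $ i) * (\<epsilon> * Y) \<le> lam * c\<^sup>2 / 4"
    and close: "\<forall>i. \<bar>wh $ i - w $ i\<bar> \<le> \<epsilon> \<or> yd $ i = 0" "\<epsilon> \<ge> 0"
    and big: "norm w \<ge> c" "c \<ge> 0"
  shows "(\<Sum>i\<in>UNIV. g $ i * wh $ i * yd $ i) \<le> - (lam * c\<^sup>2 / 2)"
proof -
  have "(\<Sum>i\<in>UNIV. g $ i * wh $ i * yd $ i) = (\<Sum>i\<in>UNIV. g $ i * w $ i * Gx $ i)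
      - (\<Sum>i\<in>UNIV. g $ i * w $ i * (D *v w) $ i) + (\<Sum>i\<in>UNIV. g $ i * (wh - w) $ i * yd $ i)"
    by (simp add: yd algebra_simps flip: sum.distrib sum_subtractf)
  moreover have "(\<Sum>i\<in>UNIV. g $ i * w $ i * Gx $ i) \<le> (\<Sum>i\<in>UNIV. g $ i) * (W * gb)"
  proof (rule weighted_sum_le[OF g])
    fix i
    have "w $ i * Gx $ i \<le> \<bar>w $ i\<bar> * \<bar>Gx $ i\<bar>" by (simp add: abs_mult[symmetric])
    also have "\<dots> \<le> W * gb"
      using wb component_le_norm_cart[of Gx i] Gxb by (intro mult_mono) (auto intro: order_trans)
    finally show "w $ i * Gx $ i \<le> W * gb" .
  qed
  moreover have "(\<Sum>i\<in>UNIV. g $ i * (wh - w) $ i * yd $ i) \<le> (\<Sum>i\<in>UNIV. g $ i) * (\<epsilon> * Y)"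
  proof (rule weighted_sum_le[OF g])
    fix i
    have "0 \<le> Y" using Yb by (meson abs_ge_zero order_trans)
    have "(wh - w) $ i * yd $ i \<le> \<bar>wh $ i - w $ i\<bar> * \<bar>yd $ i\<bar>" by (simp add: abs_mult[symmetric])
    also have "\<dots> \<le> \<epsilon> * Y"
      using close Yb \<open>0 \<le> Y\<close> by (cases "yd $ i = 0") (auto intro: mult_mono)
    finally show "(wh - w) $ i * yd $ i \<le> \<epsilon> * Y" .
  qed
  moreover have "lam * c\<^sup>2 \<le> lam * (norm w)\<^sup>2" using big lam(2) by (intro mult_left_mono power_mono) auto
  ultimately show ?thesis using lam(1) sm1 sm2 by linarith
qed

definition lure_lyapunov :: "real^'p \<Rightarrow> ('p \<Rightarrow> real) \<Rightarrow> ('p \<Rightarrow> real) \<Rightarrow> real^'n^'p \<Rightarrow> real^'n \<Rightarrow> real" where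
  "lure_lyapunov \<gamma> lp lm C z = (\<Sum>i\<in>UNIV. \<gamma> $ i * hinge (lp i) (lm i) ((C *v z) $ i))"

locale lure_lyapunov_weights =
  fixes \<gamma> :: "real^'p" and lp lm :: "'p \<Rightarrow> real"
  assumes \<gamma>_pos: "\<And>i. \<gamma> $ i > 0" and lp_pos: "\<And>i. lp i > 0" and lm_neg: "\<And>i. lm i < 0"
begin

lemma lure_lyapunov_nonneg: "lure_lyapunov \<gamma> lp lm C z \<ge> 0"
  unfolding lure_lyapunov_def using \<gamma>_pos lp_pos lm_neg
  by (intro sum_nonneg mult_nonneg_nonneg hinge_nonneg) (auto simp: less_imp_le)

lemma lure_lyapunov_eq_0_iff: "lure_lyapunov \<gamma> lp lm C z = 0 \<longleftrightarrow> C *v z = 0"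
proof
  assume V0: "lure_lyapunov \<gamma> lp lm C z = 0"
  have nonneg: "0 \<le> \<gamma> $ i * hinge (lp i) (lm i) ((C *v z) $ i)" for i
    using \<gamma>_pos[of i] hinge_nonneg[of "lp i" "lm i"] lp_pos[of i] lm_neg[of i] by simp
  have "(C *v z) $ i = 0" for i
  proof (rule ccontr)
    assume "(C *v z) $ i \<noteq> 0"
    then have "0 < \<gamma> $ i * hinge (lp i) (lm i) ((C *v z) $ i)"
      using \<gamma>_pos[of i] hinge_pos[OF lp_pos lm_neg] by simp
    moreover have "\<forall>j\<in>UNIV. \<gamma> $ j * hinge (lp j) (lm j) ((C *v z) $ j) = 0"
      using V0 nonneg unfolding lure_lyapunov_def by (simp add: sum_nonneg_eq_0_iff)
    ultimately show False by simp
  qed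
  then show "C *v z = 0" by (simp add: vec_eq_iff)
qed (simp add: lure_lyapunov_def)

lemma lure_lyapunov_lipschitz:
  fixes C :: "real^'n^'p"
  shows "\<exists>L. L-lipschitz_on UNIV (lure_lyapunov \<gamma> lp lm C)"
proof -
  obtain kC where kC: "kC > 0" "\<And>v. norm (C *v v) \<le> kC * norm v"
    using matrix_vector_mult_norm_bound by blast
  have "(\<bar>\<gamma> $ i\<bar> * ((\<bar>lp i\<bar> + \<bar>lm i\<bar>) * kC))-lipschitz_on UNIV
      (\<lambda>z. \<gamma> $ i * hinge (lp i) (lm i) ((C *v z) $ i))" for i
  proof -
    have "kC-lipschitz_on UNIV (\<lambda>z. (C *v z) $ i)"
    proof (rule lipschitz_onI)
      fix z z' :: "real^'n"
      have "\<bar>(C *v z) $ i - (C *v z') $ i\<bar> \<le> norm (C *v (z - z'))"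
        using component_le_norm_cart[of "C *v (z - z')" i] by (simp add: matrix_vector_mult_diff_distrib)
      then show "dist ((C *v z) $ i) ((C *v z') $ i) \<le> kC * dist z z'"
        using kC(2)[of "z - z'"] by (simp add: dist_norm)
    qed (use kC in simp)
    from lipschitz_on_compose2[OF this lipschitz_on_subset[OF hinge_lipschitz subset_UNIV]]
    have "((\<bar>lp i\<bar> + \<bar>lm i\<bar>) * kC)-lipschitz_on UNIV (\<lambda>z. hinge (lp i) (lm i) ((C *v z) $ i))"
      by (simp add: mult.commute)
    then show ?thesis by (rule lipschitz_on_cmult_real)
  qed
  then have "(\<Sum>i\<in>UNIV. \<bar>\<gamma> $ i\<bar> * ((\<bar>lp i\<bar> + \<bar>lm i\<bar>) * kC))-lipschitz_on UNIV
      (\<lambda>z. \<Sum>i\<in>UNIV. \<gamma> $ i * hinge (lp i) (lm i) ((C *v z) $ i))"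
    by (rule lipschitz_on_sum[OF finite_class.finite_UNIV])
  then show ?thesis unfolding lure_lyapunov_def by blast
qed

lemma has_real_derivative_lure_lyapunov:
  fixes C :: "real^'n^'p" and x :: "real \<Rightarrow> real^'n"
  assumes x: "(x has_vector_derivative v) (at t)"
    and transversal: "\<forall>i. (C *v x t) $ i \<noteq> 0 \<or> (C *v v) $ i = 0"
  shows "((\<lambda>s. lure_lyapunov \<gamma> lp lm C (x s)) has_real_derivative
    (\<Sum>i\<in>UNIV. \<gamma> $ i * (hinge_slope (lp i) (lm i) ((C *v x t) $ i) * (C *v v) $ i))) (at t)"
  unfolding lure_lyapunov_def
proof (intro DERIV_sum DERIV_cmult has_real_derivative_hinge_comp)
  fix i
  have "((\<lambda>s. (C *v x s) $ i) has_vector_derivative (C *v v) $ i) (at t)"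
    using bounded_linear.has_vector_derivative[OF bounded_linear_compose[OF bounded_linear_vec_nth[of i]
        matrix_vector_mul_bounded_linear[of C]] x] by simp
  then show "((\<lambda>s. (C *v x s) $ i) has_real_derivative (C *v v) $ i) (at t)"
    by (simp add: has_real_derivative_iff_has_vector_derivative)
  show "(C *v x t) $ i \<noteq> 0 \<or> (C *v v) $ i = 0" using transversal by blast
qed

lemma lure_lyapunov_rate_bound:
  fixes A :: "real^'n^'n" and B :: "real^'p^'n" and C :: "real^'n^'p" and psi :: "'p \<Rightarrow> real \<Rightarrow> real"
  assumes pd: "\<forall>v. v \<noteq> 0 \<longrightarrow> v \<bullet> ((diag_mat \<gamma> ** (C ** B) + transpose (C ** B) ** diag_mat \<gamma>) *v v) > 0"
    and lp_lim: "\<And>i. (psi i \<longlongrightarrow> lp i) (at_right 0)" and lm_lim: "\<And>i. (psi i \<longlongrightarrow> lm i) (at_left 0)"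
  shows "\<exists>\<rho>>0. \<exists>\<kappa>>0. \<forall>z v. norm z \<le> \<rho> \<longrightarrow> v \<in> lure_F A B C psi z \<longrightarrow>
    (\<forall>i. (C *v z) $ i \<noteq> 0 \<or> (C *v v) $ i = 0) \<longrightarrow> C *v z \<noteq> 0 \<longrightarrow>
    (\<Sum>i\<in>UNIV. \<gamma> $ i * (hinge_slope (lp i) (lm i) ((C *v z) $ i) * (C *v v) $ i)) \<le> - \<kappa>"
proof -
  have quarter: "b * x \<le> a / 4" if "0 \<le> b" "0 \<le> a" "x \<le> a / (4 * (b + 1))" for a b x :: real
  proof -
    have "b * x \<le> b * (a / (4 * (b + 1)))" using that by (intro mult_left_mono) auto
    also have "\<dots> = (a / 4) * (b / (b + 1))" using that by (simp add: field_simps)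
    also have "\<dots> \<le> (a / 4) * 1" using that by (intro mult_left_mono) auto
    finally show ?thesis by simp
  qed
  define D where "D = C ** B"
  obtain lam where lam: "lam > 0" "\<And>v. (\<Sum>i\<in>UNIV. \<gamma> $ i * v $ i * (D *v v) $ i) \<ge> lam * (norm v)\<^sup>2"
    using symmetrized_form_coercive[OF pd] unfolding D_def by blast
  define c where "c = Min (range (\<lambda>i. min (lp i) (- lm i) / 2))"
  have c: "2 * c \<le> lp i" "2 * c \<le> - lm i" for i
  proof -
    have "c \<le> min (lp i) (- lm i) / 2" unfolding c_def by (rule Min_le) auto
    then show "2 * c \<le> lp i" "2 * c \<le> - lm i" by auto
  qed
  have "c > 0" unfolding c_def using lp_pos lm_neg by simp
  define W where "W = Max (range (\<lambda>i. max (max (\<bar>lp i\<bar> + 1) (\<bar>lm i\<bar> + 1)) \<bar>psi i 0\<bar>))"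
  have W: "\<bar>lp i\<bar> + 1 \<le> W" "\<bar>lm i\<bar> + 1 \<le> W" "\<bar>psi i 0\<bar> \<le> W" for i
  proof -
    have "max (max (\<bar>lp i\<bar> + 1) (\<bar>lm i\<bar> + 1)) \<bar>psi i 0\<bar> \<le> W" unfolding W_def by (rule Max_ge) auto
    then show "\<bar>lp i\<bar> + 1 \<le> W" "\<bar>lm i\<bar> + 1 \<le> W" "\<bar>psi i 0\<bar> \<le> W" by auto
  qed
  have "W \<ge> 0" using W(3) by (meson abs_ge_zero order_trans)
  define Gs where "Gs = (\<Sum>i\<in>UNIV. \<gamma> $ i)"
  have "Gs \<ge> 0" unfolding Gs_def using \<gamma>_pos by (simp add: sum_nonneg less_imp_le)
  obtain kG where kG: "kG > 0" "\<And>v. norm ((C ** A) *v v) \<le> kG * norm v"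
    using matrix_vector_mult_norm_bound by blast
  obtain kD where kD: "kD > 0" "\<And>v. norm (D *v v) \<le> kD * norm v"
    using matrix_vector_mult_norm_bound by blast
  obtain kC where kC: "kC > 0" "\<And>v. norm (C *v v) \<le> kC * norm v"
    using matrix_vector_mult_norm_bound by blast
  define Y where "Y = kG + kD * (real CARD('p) * W)"
  have "Y \<ge> 0" unfolding Y_def using kG kD \<open>W \<ge> 0\<close> by simp
  define \<epsilon> where "\<epsilon> = min (min 1 c) (lam * c\<^sup>2 / (4 * (Gs * Y + 1)))"
  have \<epsilon>: "0 < \<epsilon>" "\<epsilon> \<le> 1" "\<epsilon> \<le> c" unfolding \<epsilon>_def
    using \<open>c > 0\<close> lam(1) mult_nonneg_nonneg[OF \<open>Gs \<ge> 0\<close> \<open>Y \<ge> 0\<close>] by (auto intro!: divide_pos_pos)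
  have sm2: "Gs * (\<epsilon> * Y) \<le> lam * c\<^sup>2 / 4"
    using quarter[of "Gs * Y" "lam * c\<^sup>2" \<epsilon>] \<open>Gs \<ge> 0\<close> \<open>Y \<ge> 0\<close> lam(1)
    unfolding \<epsilon>_def by (simp add: algebra_simps)
  obtain \<eta> where "\<eta> > 0" and near: "\<forall>y w. (\<forall>i. \<bar>y $ i\<bar> < \<eta>) \<longrightarrow> w \<in> kras_vec psi y \<longrightarrow>
      (\<forall>i. \<bar>w $ i\<bar> \<le> W \<and> (y $ i > 0 \<longrightarrow> \<bar>w $ i - lp i\<bar> \<le> \<epsilon>) \<and> (y $ i < 0 \<longrightarrow> \<bar>w $ i - lm i\<bar> \<le> \<epsilon>))"
    using kras_vec_near_zero[where psi = psi and lp = lp and lm = lm and W = W, OF lp_lim lm_lim \<epsilon>(1,2) W]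
    by blast
  define \<rho> where "\<rho> = min 1 (min (\<eta> / (kC + 1)) (lam * c\<^sup>2 / (4 * (Gs * (W * kG) + 1))))"
  have \<rho>: "0 < \<rho>" "\<rho> \<le> 1" "\<rho> \<le> \<eta> / (kC + 1)" unfolding \<rho>_def
    using \<open>\<eta> > 0\<close> kC(1) lam(1) \<open>c > 0\<close> \<open>Gs \<ge> 0\<close> \<open>W \<ge> 0\<close> kG(1)
    by (auto intro!: divide_pos_pos add_nonneg_pos mult_nonneg_nonneg)
  have sm1: "Gs * (W * (kG * \<rho>)) \<le> lam * c\<^sup>2 / 4"
    using quarter[of "Gs * (W * kG)" "lam * c\<^sup>2" \<rho>] \<open>Gs \<ge> 0\<close> \<open>W \<ge> 0\<close> kG(1) lam(1)
    unfolding \<rho>_def by (simp add: algebra_simps)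
  have y_small: "\<bar>(C *v z) $ i\<bar> < \<eta>" if "norm z \<le> \<rho>" for z i
  proof -
    have "\<bar>(C *v z) $ i\<bar> \<le> kC * norm z" using component_le_norm_cart[of "C *v z" i] kC(2)[of z] by linarith
    also have "\<dots> \<le> kC * (\<eta> / (kC + 1))" using that \<rho>(3) kC(1) by (intro mult_left_mono) auto
    also have "\<dots> < \<eta>" using \<open>\<eta> > 0\<close> kC(1) by (simp add: field_simps)
    finally show ?thesis .
  qed
  have "(\<Sum>i\<in>UNIV. \<gamma> $ i * (hinge_slope (lp i) (lm i) ((C *v z) $ i) * (C *v v) $ i)) \<le> - (lam * c\<^sup>2 / 2)"
    if z: "norm z \<le> \<rho>" and v: "v \<in> lure_F A B C psi z" and transversal: "\<forall>i. (C *v z) $ i \<noteq> 0 \<or> (C *v v) $ i = 0"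
      and nz: "C *v z \<noteq> 0" for z v
  proof -
    obtain w where w: "v = A *v z - B *v w" "w \<in> kras_vec psi (C *v z)"
      using v unfolding lure_F_def by blast
    define wh where "wh = (\<chi> i. hinge_slope (lp i) (lm i) ((C *v z) $ i))"
    have near_w: "\<bar>w $ i\<bar> \<le> W" "(C *v z) $ i > 0 \<Longrightarrow> \<bar>w $ i - lp i\<bar> \<le> \<epsilon>"
      "(C *v z) $ i < 0 \<Longrightarrow> \<bar>w $ i - lm i\<bar> \<le> \<epsilon>" for i
      using near y_small[OF z] w(2) by blast+
    have yd: "C *v v = (C ** A) *v z - D *v w"
      unfolding w(1) D_def by (simp add: matrix_vector_mult_diff_distrib matrix_vector_mul_assoc)
    have Gx: "norm ((C ** A) *v z) \<le> kG * \<rho>"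
      using kG(2)[of z] z kG(1) by (meson mult_left_mono less_imp_le order_trans)
    have "norm w \<le> real CARD('p) * W"
    proof -
      have "norm w \<le> (\<Sum>i\<in>UNIV. \<bar>w $ i\<bar>)" by (rule norm_le_l1_cart)
      also have "\<dots> \<le> real CARD('p) * W" using near_w(1) sum_bounded_above[of UNIV "\<lambda>i. \<bar>w $ i\<bar>" W] by simp
      finally show ?thesis .
    qed
    then have "norm (D *v w) \<le> kD * (real CARD('p) * W)"
      using kD by (meson mult_left_mono less_imp_le order_trans)
    then have Yb: "\<bar>(C *v v) $ i\<bar> \<le> Y" for i
      using component_le_norm_cart[of "C *v v" i] norm_triangle_ineq4[of "(C ** A) *v z" "D *v w"]
        Gx \<rho>(2) kG(1) mult_left_le[of \<rho> kG] unfolding yd Y_def by linarith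
    have close: "\<forall>i. \<bar>wh $ i - w $ i\<bar> \<le> \<epsilon> \<or> (C *v v) $ i = 0"
      using near_w(2,3) transversal unfolding wh_def hinge_slope_def by (auto simp: abs_minus_commute)
    obtain i0 where i0: "(C *v z) $ i0 \<noteq> 0" using nz by (auto simp: vec_eq_iff)
    then have "c \<le> \<bar>w $ i0\<bar>"
      using near_w(2,3)[of i0] c[of i0] \<epsilon>(3) by (cases "(C *v z) $ i0 > 0") (auto simp: abs_le_iff)
    then have big: "c \<le> norm w" using component_le_norm_cart[of w i0] by linarith
    have "(\<Sum>i\<in>UNIV. \<gamma> $ i * wh $ i * (C *v v) $ i) \<le> - (lam * c\<^sup>2 / 2)"
      using \<gamma>_pos lam(2)[of w] lam(1) yd near_w(1) Gx sm1 Yb sm2 close \<epsilon>(1) big \<open>c > 0\<close>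
      unfolding Gs_def by (intro slope_sum_estimate[where D = D and W = W and Y = Y]) auto
    then show ?thesis unfolding wh_def by (simp add: mult.assoc)
  qed
  moreover have "lam * c\<^sup>2 / 2 > 0" using lam(1) \<open>c > 0\<close> by simp
  ultimately show ?thesis using \<rho>(1) by blast
qed

lemma lure_lyapunov_decrease_AE:
  fixes A :: "real^'n^'n" and B :: "real^'p^'n" and C :: "real^'n^'p" and psi :: "'p \<Rightarrow> real \<Rightarrow> real"
  assumes sol: "is_sol (lure_F A B C psi) x \<infinity>"
    and rate: "\<forall>z v. norm z \<le> \<rho> \<longrightarrow> v \<in> lure_F A B C psi z \<longrightarrow>
      (\<forall>i. (C *v z) $ i \<noteq> 0 \<or> (C *v v) $ i = 0) \<longrightarrow> C *v z \<noteq> 0 \<longrightarrow>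
      (\<Sum>i\<in>UNIV. \<gamma> $ i * (hinge_slope (lp i) (lm i) ((C *v z) $ i) * (C *v v) $ i)) \<le> - \<kappa>"
    and \<kappa>: "\<kappa> > 0" and small: "\<And>t. t1 \<le> t \<Longrightarrow> norm (x t) \<le> \<rho>" and "t1 \<ge> 0"
  shows "AE t in lborel. t1 < t \<longrightarrow> (\<exists>d. ((\<lambda>s. lure_lyapunov \<gamma> lp lm C (x s)) has_real_derivative d) (at t) \<and>
    d \<le> 0 \<and> (lure_lyapunov \<gamma> lp lm C (x t) > 0 \<longrightarrow> d \<le> - \<kappa>))"
proof -
  have "AE t in lborel. \<forall>i. \<forall>d. ((\<lambda>s. (C *v x s) $ i) has_real_derivative d) (at t) \<longrightarrow> (C *v x t) $ i \<noteq> 0 \<or> d = 0"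
    by (rule eventually_all_finite) (rule AE_derivative_zero_at_zeros)
  moreover have "AE t in lborel. 0 < t \<and> ereal t < \<infinity> \<longrightarrow>
      (\<exists>v. (x has_vector_derivative v) (at t) \<and> v \<in> lure_F A B C psi (x t))"
    using sol unfolding is_sol_def by blast
  ultimately show ?thesis
  proof eventually_elim
    case (elim t)
    show ?case
    proof
      assume "t1 < t"
      then obtain v where v: "(x has_vector_derivative v) (at t)" "v \<in> lure_F A B C psi (x t)"
        using elim(2) \<open>t1 \<ge> 0\<close> by auto
      have "((\<lambda>s. (C *v x s) $ i) has_real_derivative (C *v v) $ i) (at t)" for i
        using bounded_linear.has_vector_derivative[OF bounded_linear_compose[OF bounded_linear_vec_nth[of i]
            matrix_vector_mul_bounded_linear[of C]] v(1)]
        by (simp add: has_real_derivative_iff_has_vector_derivative)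
      then have transversal: "\<forall>i. (C *v x t) $ i \<noteq> 0 \<or> (C *v v) $ i = 0" using elim(1) by blast
      define d where "d = (\<Sum>i\<in>UNIV. \<gamma> $ i * (hinge_slope (lp i) (lm i) ((C *v x t) $ i) * (C *v v) $ i))"
      have "C *v x t \<noteq> 0 \<Longrightarrow> d \<le> - \<kappa>" using rate small[of t] \<open>t1 < t\<close> v(2) transversal unfolding d_def by simp
      moreover have "C *v x t = 0 \<Longrightarrow> d = 0" unfolding d_def hinge_slope_def by simp
      ultimately have "d \<le> 0 \<and> (lure_lyapunov \<gamma> lp lm C (x t) > 0 \<longrightarrow> d \<le> - \<kappa>)"
        using \<kappa> lure_lyapunov_eq_0_iff[of C "x t"] by (cases "C *v x t = 0") auto
      then show "\<exists>d. ((\<lambda>s. lure_lyapunov \<gamma> lp lm C (x s)) has_real_derivative d) (at t) \<and>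
          d \<le> 0 \<and> (lure_lyapunov \<gamma> lp lm C (x t) > 0 \<longrightarrow> d \<le> - \<kappa>)"
        using has_real_derivative_lure_lyapunov[OF v(1) transversal] unfolding d_def by blast
    qed
  qed
qed

lemma lure_lyapunov_vanishes:
  fixes A :: "real^'n^'n" and B :: "real^'p^'n" and C :: "real^'n^'p" and psi :: "'p \<Rightarrow> real \<Rightarrow> real"
  assumes sol: "is_sol (lure_F A B C psi) x \<infinity>"
    and rate: "\<forall>z v. norm z \<le> \<rho> \<longrightarrow> v \<in> lure_F A B C psi z \<longrightarrow>
      (\<forall>i. (C *v z) $ i \<noteq> 0 \<or> (C *v v) $ i = 0) \<longrightarrow> C *v z \<noteq> 0 \<longrightarrow>
      (\<Sum>i\<in>UNIV. \<gamma> $ i * (hinge_slope (lp i) (lm i) ((C *v z) $ i) * (C *v v) $ i)) \<le> - \<kappa>"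
    and \<kappa>: "\<kappa> > 0" and small: "\<And>t. t1 \<le> t \<Longrightarrow> norm (x t) \<le> \<rho>" and t1: "t1 \<ge> 0"
  shows "\<exists>T0\<ge>0. \<forall>t\<ge>T0. C *v x t = 0"
proof -
  obtain L where L: "L-lipschitz_on UNIV (lure_lyapunov \<gamma> lp lm C)" using lure_lyapunov_lipschitz by blast
  define g where "g t = lure_lyapunov \<gamma> lp lm C (x t)" for t
  have "g t = 0" if "t1 + g t1 / \<kappa> < t" for t
  proof (rule abs_cont_finite_time_zero[of \<kappa> g t1, OF \<kappa> _ _ _ that])
    show "g t \<ge> 0" for t unfolding g_def by (rule lure_lyapunov_nonneg)
    show "abs_cont_on {t1..b} g" for b
    proof -
      have "abs_cont_on {0..max 0 b} x" using sol unfolding is_sol_def by simp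
      then have "abs_cont_on {t1..b} x" by (rule abs_cont_on_subset) (use t1 in auto)
      then show ?thesis unfolding g_def by (rule abs_cont_on_compose_lipschitz[OF _ L])
    qed
    show "AE t in lborel. t1 < t \<longrightarrow> (\<exists>d. (g has_real_derivative d) (at t) \<and> d \<le> 0 \<and> (g t > 0 \<longrightarrow> d \<le> - \<kappa>))"
      unfolding g_def using sol rate \<kappa> small t1 by (rule lure_lyapunov_decrease_AE)
  qed
  then have "C *v x t = 0" if "t1 + g t1 / \<kappa> + 1 \<le> t" for t
    using that lure_lyapunov_eq_0_iff[of C "x t"] unfolding g_def by simp
  moreover have "0 \<le> t1 + g t1 / \<kappa> + 1"
    using t1 lure_lyapunov_nonneg[of C "x t1"] \<kappa> unfolding g_def by simp
  ultimately show ?thesis by blast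
qed

end

section \<open>Sufficiency of invertibility\<close>

lemma invertible_imp_SFTS:
  fixes A :: "real^'n^'n" and B :: "real^'p^'n" and C :: "real^'n^'p" and psi :: "'p \<Rightarrow> real \<Rightarrow> real"
  assumes a3: "assumption3 A B C psi" and inv: "invertible C"
  shows "SFTS (lure_F A B C psi)"
proof -
  from a3 obtain \<gamma> :: "real^'p"
    where \<gamma>: "\<forall>i. \<gamma> $ i > 0"
      and pd: "\<forall>v. v \<noteq> 0 \<longrightarrow> v \<bullet> ((diag_mat \<gamma> ** (C ** B) + transpose (C ** B) ** diag_mat \<gamma>) *v v) > 0"
      and gas: "GAS (lure_F A B C psi)"
      and lims: "\<forall>i. (\<exists>l>0. (psi i \<longlongrightarrow> l) (at_right 0)) \<and> (\<exists>l<0. (psi i \<longlongrightarrow> l) (at_left 0))"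
    unfolding assumption3_def Let_def by blast
  have "\<forall>i. \<exists>l. l > 0 \<and> (psi i \<longlongrightarrow> l) (at_right 0)" using lims by blast
  then obtain lp where lp: "\<forall>i. lp i > 0 \<and> (psi i \<longlongrightarrow> lp i) (at_right 0)" by (rule choice[THEN exE]) blast
  have "\<forall>i. \<exists>l. l < 0 \<and> (psi i \<longlongrightarrow> l) (at_left 0)" using lims by blast
  then obtain lm where lm: "\<forall>i. lm i < 0 \<and> (psi i \<longlongrightarrow> lm i) (at_left 0)" by (rule choice[THEN exE]) blast
  interpret lure_lyapunov_weights \<gamma> lp lm
    by unfold_locales (use \<gamma> lp lm in blast)+
  have "\<exists>\<rho>>0. \<exists>\<kappa>>0. \<forall>z v. norm z \<le> \<rho> \<longrightarrow> v \<in> lure_F A B C psi z \<longrightarrow>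
      (\<forall>i. (C *v z) $ i \<noteq> 0 \<or> (C *v v) $ i = 0) \<longrightarrow> C *v z \<noteq> 0 \<longrightarrow>
      (\<Sum>i\<in>UNIV. \<gamma> $ i * (hinge_slope (lp i) (lm i) ((C *v z) $ i) * (C *v v) $ i)) \<le> - \<kappa>"
    by (rule lure_lyapunov_rate_bound[OF pd]) (use lp lm in blast)+
  then obtain \<rho> \<kappa> where "\<rho> > 0" "\<kappa> > 0" and rate: "\<forall>z v. norm z \<le> \<rho> \<longrightarrow> v \<in> lure_F A B C psi z \<longrightarrow>
      (\<forall>i. (C *v z) $ i \<noteq> 0 \<or> (C *v v) $ i = 0) \<longrightarrow> C *v z \<noteq> 0 \<longrightarrow>
      (\<Sum>i\<in>UNIV. \<gamma> $ i * (hinge_slope (lp i) (lm i) ((C *v z) $ i) * (C *v v) $ i)) \<le> - \<kappa>"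
    by blast
  from gas obtain \<beta> where \<beta>: "classKL \<beta>"
    "\<And>x T t. is_sol (lure_F A B C psi) x T \<Longrightarrow> 0 \<le> t \<Longrightarrow> ereal t < T \<Longrightarrow> norm (x t) \<le> \<beta> (norm (x 0)) t"
    unfolding GAS_def by blast
  obtain Ci where "Ci ** C = mat 1" using inv unfolding invertible_def by blast
  then have C_inj: "z = 0" if "C *v z = 0" for z
    by (metis matrix_vector_mul_assoc matrix_vector_mul_lid matrix_vector_mult_0_right that)
  have finite_time: "\<exists>T0\<ge>0. \<forall>t. T0 \<le> t \<and> ereal t < \<infinity> \<longrightarrow> x t = 0"
    if sol: "is_sol (lure_F A B C psi) x \<infinity>" for x
  proof -
    have "(\<beta> (norm (x 0)) \<longlongrightarrow> 0) at_top" using \<beta>(1) unfolding classKL_def by simp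
    then have "eventually (\<lambda>t. \<beta> (norm (x 0)) t < \<rho>) at_top" using \<open>\<rho> > 0\<close> by (rule order_tendstoD(2))
    then obtain t0 where t0: "\<And>t. t \<ge> t0 \<Longrightarrow> \<beta> (norm (x 0)) t < \<rho>"
      unfolding eventually_at_top_linorder by blast
    define t1 where "t1 = max 0 t0"
    have "t1 \<ge> 0" unfolding t1_def by simp
    have small: "norm (x t) \<le> \<rho>" if "t1 \<le> t" for t
    proof -
      have "norm (x t) \<le> \<beta> (norm (x 0)) t" using \<beta>(2)[OF sol] that \<open>t1 \<ge> 0\<close> by simp
      also have "\<dots> < \<rho>" using t0 that unfolding t1_def by simp
      finally show ?thesis by simp
    qed
    obtain T0 where "T0 \<ge> 0" "\<And>t. T0 \<le> t \<Longrightarrow> C *v x t = 0"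
      using lure_lyapunov_vanishes[OF sol rate \<open>\<kappa> > 0\<close> small \<open>t1 \<ge> 0\<close>] by blast
    then show ?thesis using C_inj by blast
  qed
  show ?thesis unfolding SFTS_def
  proof (intro conjI allI impI)
    show "forward_complete (lure_F A B C psi)" using gas unfolding GAS_def by blast
    show "GAS (lure_F A B C psi)" by (rule gas)
    fix x T assume sol: "is_sol (lure_F A B C psi) x T"
    show "\<exists>T0\<ge>0. \<forall>t. T0 \<le> t \<and> ereal t < T \<longrightarrow> x t = 0"
    proof (cases "T = \<infinity>")
      case False
      \<comment> \<open>on a bounded interval of existence the claim is vacuous beyond its end\<close>
      then obtain r where "T = ereal r" using sol unfolding is_sol_def by (cases T) auto
      then show ?thesis by (intro exI[of _ "max 0 r"]) auto
    qed (use finite_time sol in blast)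
  qed
qed

theorem theorem3:
  fixes A :: "real^'n^'n" and B :: "real^'p^'n" and C :: "real^'n^'p"
    and psi :: "'p \<Rightarrow> real \<Rightarrow> real"
  assumes "assumption1 psi"
    and "assumption3 A B C psi"
  shows "SFTS (lure_F A B C psi) \<longleftrightarrow> invertible C"
  using SFTS_imp_invertible[OF assms(2)] invertible_imp_SFTS[OF assms(2)] by blast

end
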